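(* Let $b\in\mathbb{N}$, $b\ge 1$, and $n=\frac{2^b}{2}+b$. Then a DBN with visible layer of width $n$ and $m=\frac{2^n}{2(n-b)}$ hidden layers, each of width $n$, is a universal approximator of distributions on $\{0,1\}^n$: for every probability distribution $p$ on $\{0,1\}^n$ and every $\varepsilon>0$ there exist parameters of the DBN whose visible marginal distribution $q$ satisfies $D(p\,\|\,q)<\varepsilon$.
   Context: A Deep Belief Network (DBN) with layers $h^0,h^1,\dots,h^m$, each $h^i\in\{0,1\}^n$ (here $h^0$ is the visible layer and $h^1,\dots,h^m$ are the hidden layers), has parameters: for the top two layers, $W\in\mathbb{R}^{n\times n}$, $B,C\in\mathbb{R}^n$; for each $i\in\{0,\dots,m-2\}$, a matrix $W^i\in\mathbb{R}^{n\times n}$ and offset vector $c^i\in\mathbb{R}^n$. Its joint distribution is $P(h^0,\dots,h^m)=P(h^{m-1},h^m)\prod_{i=0}^{m-2}P(h^i\mid h^{i+1})$, where $P(h^{m-1},h^m)=\frac{1}{Z}\exp\big((h^m)^TWh^{m-1}+B\cdot h^{m-1}+C\cdot h^m\big)$ (a Restricted Boltzmann Machine) and $P(h^i\mid h^{i+1})=\prod_{j=1}^n P(h^i_j\mid h^{i+1})$ with $P(h^i_j=1\mid h^{i+1})=\sigma\big(\sum_k W^i_{jk}h^{i+1}_k+c^i_j\big)$, $\sigma(x)=1/(1+e^{-x})$. The visible marginal distribution is $q(h^0)=\sum_{h^1,\dots,h^m}P(h^0,\dots,h^m)$. $D(p\|q)$ is the Kullback–Leibler divergence. *)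

theory Defs
  imports "HOL-Analysis.Analysis"
begin

text \<open>Binary states: the cube {0,1}^n, represented by functions nat => bool
  that are False outside {0..<n}.\<close>
definition cube :: "nat \<Rightarrow> (nat \<Rightarrow> bool) set" where
  "cube n = {x. \<forall>i. n \<le> i \<longrightarrow> \<not> x i}"

definition sigmoid :: "real \<Rightarrow> real" where
  "sigmoid x = 1 / (1 + exp (- x))"

text \<open>Parameters of a DBN with layers h^0..h^m of width n:
  W, B, C for the top RBM on (h^(m-1), h^m); Ws i and cs i (i = 0..m-2) for the
  conditional P(h^i | h^(i+1)).\<close>

definition rbm_energy :: "nat \<Rightarrow> (nat \<Rightarrow> nat \<Rightarrow> real) \<Rightarrow> (nat \<Rightarrow> real) \<Rightarrow> (nat \<Rightarrow> real)
    \<Rightarrow> (nat \<Rightarrow> bool) \<Rightarrow> (nat \<Rightarrow> bool) \<Rightarrow> real" where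
  "rbm_energy n W B C v h =
     (\<Sum>j<n. \<Sum>k<n. of_bool (h j) * W j k * of_bool (v k))
     + (\<Sum>k<n. B k * of_bool (v k)) + (\<Sum>j<n. C j * of_bool (h j))"

definition rbm_prob :: "nat \<Rightarrow> (nat \<Rightarrow> nat \<Rightarrow> real) \<Rightarrow> (nat \<Rightarrow> real) \<Rightarrow> (nat \<Rightarrow> real)
    \<Rightarrow> (nat \<Rightarrow> bool) \<Rightarrow> (nat \<Rightarrow> bool) \<Rightarrow> real" where
  "rbm_prob n W B C v h =
     exp (rbm_energy n W B C v h) /
     (\<Sum>(v', h') \<in> cube n \<times> cube n. exp (rbm_energy n W B C v' h'))"

definition cond_prob :: "nat \<Rightarrow> (nat \<Rightarrow> nat \<Rightarrow> real) \<Rightarrow> (nat \<Rightarrow> real)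
    \<Rightarrow> (nat \<Rightarrow> bool) \<Rightarrow> (nat \<Rightarrow> bool) \<Rightarrow> real" where
  "cond_prob n Wi ci x y =
     (\<Prod>j<n. let s = sigmoid ((\<Sum>k<n. Wi j k * of_bool (y k)) + ci j)
             in if x j then s else 1 - s)"

definition dbn_joint :: "nat \<Rightarrow> nat \<Rightarrow> (nat \<Rightarrow> nat \<Rightarrow> real) \<Rightarrow> (nat \<Rightarrow> real) \<Rightarrow> (nat \<Rightarrow> real)
    \<Rightarrow> (nat \<Rightarrow> nat \<Rightarrow> nat \<Rightarrow> real) \<Rightarrow> (nat \<Rightarrow> nat \<Rightarrow> real)
    \<Rightarrow> (nat \<Rightarrow> (nat \<Rightarrow> bool)) \<Rightarrow> real" where
  "dbn_joint n m W B C Ws cs H =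
     rbm_prob n W B C (H (m - 1)) (H m) *
     (\<Prod>i<m - 1. cond_prob n (Ws i) (cs i) (H i) (H (Suc i)))"

definition dbn_visible :: "nat \<Rightarrow> nat \<Rightarrow> (nat \<Rightarrow> nat \<Rightarrow> real) \<Rightarrow> (nat \<Rightarrow> real) \<Rightarrow> (nat \<Rightarrow> real)
    \<Rightarrow> (nat \<Rightarrow> nat \<Rightarrow> nat \<Rightarrow> real) \<Rightarrow> (nat \<Rightarrow> nat \<Rightarrow> real)
    \<Rightarrow> (nat \<Rightarrow> bool) \<Rightarrow> real" where
  "dbn_visible n m W B C Ws cs v =
     (\<Sum>H \<in> PiE {1..m} (\<lambda>_. cube n). dbn_joint n m W B C Ws cs (H(0 := v)))"

definition is_distribution :: "nat \<Rightarrow> ((nat \<Rightarrow> bool) \<Rightarrow> real) \<Rightarrow> bool" where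
  "is_distribution n p \<longleftrightarrow> (\<forall>x \<in> cube n. 0 \<le> p x) \<and> (\<Sum>x \<in> cube n. p x) = 1"

definition KL_div :: "nat \<Rightarrow> ((nat \<Rightarrow> bool) \<Rightarrow> real) \<Rightarrow> ((nat \<Rightarrow> bool) \<Rightarrow> real) \<Rightarrow> ereal" where
  "KL_div n p q =
     (if \<exists>x \<in> cube n. 0 < p x \<and> q x = 0 then \<infinity>
      else ereal (\<Sum>x \<in> {x \<in> cube n. 0 < p x}. p x * ln (p x / q x)))"

end

theory Submission
  imports Defs "HOL-Real_Asymp.Real_Asymp"
begin

text \<open>With \<open>n = d + 1 + c\<close> and \<open>d = 2\<^sup>c\<close>, the cube \<open>{0,1}\<^sup>n\<close> splits into \<open>2d\<close> chains of
  length \<open>2\<^sup>d\<close>: the last \<open>c\<close> coordinates label one of \<open>d\<close> groups, coordinate \<open>d\<close> is a free bit, and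
  the first \<open>d\<close> coordinates run through a Gray code rotated by the group index. Along a chain
  consecutive states differ in one coordinate, and at each step the \<open>d\<close> groups flip \<open>d\<close> different
  coordinates. So one layer of sigmoid units with weights of order \<open>K \<rightarrow> \<infinity>\<close> can advance all chains
  at once: the current state of each chain stays with probability (its target mass)/(mass of the rest
  of the chain) and otherwise moves on, while every other state is copied. The top RBM, in the same
  limit, puts the mass of each chain on its first state, and \<open>2\<^sup>d - 1\<close> such layers then reproduce an
  arbitrary positive distribution \<open>r\<close> in the limit. Choosing \<open>r\<close> close to \<open>p\<close> in KL divergence
  gives the theorem.\<close>

text \<open>Sums over bits are kept in the affine form \<open>\<Sum>k<n. a k * of_bool (x k)\<close>.\<close>
declare sum_mult_of_bool_eq [simp del] sum_of_bool_mult_eq [simp del]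

section \<open>Kernels and saturating limits\<close>

lemma bij_betw_cube_Pow: "bij_betw (\<lambda>x. {i. x i}) (cube k) (Pow {..<k})"
proof -
  have "X \<in> (\<lambda>x. {i. x i}) ` cube k" if "X \<subseteq> {..<k}" for X
    using that unfolding cube_def by (auto intro!: image_eqI[of _ _ "\<lambda>i. i \<in> X"])
  then show ?thesis unfolding bij_betw_def inj_on_def cube_def
    by (auto simp: fun_eq_iff) (meson not_le)
qed

lemma finite_cube: "finite (cube k)"
  using bij_betw_cube_Pow bij_betw_finite by blast

lemma card_cube: "card (cube k) = 2 ^ k"
  using bij_betw_same_card[OF bij_betw_cube_Pow] card_Pow by fastforce

lemma cube_eq_iff:
  assumes "z \<in> cube n" "x \<in> cube n"
  shows "z = x \<longleftrightarrow> (\<forall>j<n. z j = x j)"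
proof
  assume eq: "\<forall>j<n. z j = x j"
  show "z = x"
  proof
    fix j
    show "z j = x j" using eq assms by (cases "j < n") (auto simp: cube_def)
  qed
qed auto

lemma prod_of_bool: "finite A \<Longrightarrow> (\<Prod>j\<in>A. of_bool (Q j) :: real) = of_bool (\<forall>j\<in>A. Q j)"
  by (induction A rule: finite_induct) auto

text \<open>\<open>apply_kernels k C N f x = \<Sum>y\<^sub>1 \<dots> y\<^sub>N. k 0 x y\<^sub>1 * \<dots> * k (N-1) y\<^sub>N\<^sub>-\<^sub>1 y\<^sub>N * f y\<^sub>N\<close>\<close>
fun apply_kernels :: "(nat \<Rightarrow> 'a \<Rightarrow> 'a \<Rightarrow> real) \<Rightarrow> 'a set \<Rightarrow> nat \<Rightarrow> ('a \<Rightarrow> real) \<Rightarrow> 'a \<Rightarrow> real" where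
  "apply_kernels k C 0 f = f"
| "apply_kernels k C (Suc N) f = apply_kernels k C N (\<lambda>x. \<Sum>y\<in>C. k N x y * f y)"

lemma sum_PiE_insert:
  assumes "a \<notin> S"
  shows "(\<Sum>H\<in>PiE (insert a S) (\<lambda>_. C). F H) = (\<Sum>g\<in>PiE S (\<lambda>_. C). \<Sum>y\<in>C. F (g(a := y)))"
proof -
  have "(\<Sum>H\<in>PiE (insert a S) (\<lambda>_. C). F H) = (\<Sum>(y, g)\<in>C \<times> PiE S (\<lambda>_. C). F (g(a := y)))"
    unfolding PiE_insert_eq
    by (subst sum.reindex[OF inj_combinator[OF assms]]) (simp add: case_prod_unfold)
  also have "\<dots> = (\<Sum>y\<in>C. \<Sum>g\<in>PiE S (\<lambda>_. C). F (g(a := y)))"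
    by (simp add: sum.cartesian_product)
  also have "\<dots> = (\<Sum>g\<in>PiE S (\<lambda>_. C). \<Sum>y\<in>C. F (g(a := y)))"
    by (rule sum.swap)
  finally show ?thesis .
qed

lemma sum_paths_eq_apply_kernels:
  "(\<Sum>H\<in>PiE {1..N} (\<lambda>_. C). f ((H(0 := v)) N) * (\<Prod>i<N. k i ((H(0 := v)) i) ((H(0 := v)) (Suc i))))
     = apply_kernels k C N f v"
proof (induction N arbitrary: f)
  case 0
  then show ?case by simp
next
  case (Suc N)
  have upd: "(g(Suc N := y))(0 := v) = (g(0 := v))(Suc N := y)" for g y
    by (auto simp: fun_eq_iff)
  have prefix: "(\<Prod>i<N. k i (((g(0 := v))(Suc N := y)) i) (((g(0 := v))(Suc N := y)) (Suc i)))
      = (\<Prod>i<N. k i ((g(0 := v)) i) ((g(0 := v)) (Suc i)))" for g y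
    by (rule prod.cong) auto
  have ins: "{1..Suc N} = insert (Suc N) {1..N}" by auto
  have "(\<Sum>H\<in>PiE {1..Suc N} (\<lambda>_. C). f ((H(0 := v)) (Suc N)) *
        (\<Prod>i<Suc N. k i ((H(0 := v)) i) ((H(0 := v)) (Suc i))))
      = (\<Sum>g\<in>PiE {1..N} (\<lambda>_. C). \<Sum>y\<in>C. f y *
          ((\<Prod>i<N. k i ((g(0 := v)) i) ((g(0 := v)) (Suc i))) * k N ((g(0 := v)) N) y))"
    unfolding ins by (subst sum_PiE_insert) (auto simp: upd prefix)
  also have "\<dots> = (\<Sum>g\<in>PiE {1..N} (\<lambda>_. C). (\<lambda>x. \<Sum>y\<in>C. k N x y * f y) ((g(0 := v)) N) *
          (\<Prod>i<N. k i ((g(0 := v)) i) ((g(0 := v)) (Suc i))))"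
    by (auto simp: sum_distrib_right mult_ac intro!: sum.cong)
  also have "\<dots> = apply_kernels k C (Suc N) f v"
    using Suc.IH by simp
  finally show ?case .
qed

lemma apply_kernels_cong:
  "(\<And>y. y \<in> C \<Longrightarrow> f y = f' y) \<Longrightarrow> x \<in> C \<Longrightarrow> apply_kernels k C N f x = apply_kernels k C N f' x"
proof (induction N arbitrary: f f' x)
  case (Suc N)
  have "(\<lambda>x. \<Sum>y\<in>C. k N x y * f y) = (\<lambda>x. \<Sum>y\<in>C. k N x y * f' y)"
    using Suc.prems by (auto intro!: sum.cong)
  then show ?case by simp
qed simp

lemma tendsto_apply_kernels:
  assumes "\<And>i x y. i < N \<Longrightarrow> x \<in> C \<Longrightarrow> y \<in> C \<Longrightarrow> ((\<lambda>K. k K i x y) \<longlongrightarrow> k' i x y) F"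
    and "\<And>y. y \<in> C \<Longrightarrow> ((\<lambda>K. f K y) \<longlongrightarrow> f' y) F" and "x \<in> C"
  shows "((\<lambda>K. apply_kernels (k K) C N (f K) x) \<longlongrightarrow> apply_kernels k' C N f' x) F"
  using assms
proof (induction N arbitrary: f f' x)
  case (Suc N)
  have "((\<lambda>K. \<Sum>y\<in>C. k K N x y * f K y) \<longlongrightarrow> (\<Sum>y\<in>C. k' N x y * f' y)) F" if "x \<in> C" for x
    using Suc.prems that by (intro tendsto_sum tendsto_mult) auto
  then show ?case using Suc by simp
qed simp

lemma dbn_visible_eq_apply_kernels:
  "dbn_visible n (Suc T) W B C Ws cs x =
     apply_kernels (\<lambda>i. cond_prob n (Ws i) (cs i)) (cube n) T (\<lambda>y. \<Sum>h\<in>cube n. rbm_prob n W B C y h) x"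
proof -
  have upd: "((g(Suc T := y))(0 := x)) i = (g(0 := x)) i" if "i \<le> T" for g y i
    using that by auto
  have prefix: "(\<Prod>i<T. cond_prob n (Ws i) (cs i) (((g(Suc T := y))(0 := x)) i) (((g(Suc T := y))(0 := x)) (Suc i)))
      = (\<Prod>i<T. cond_prob n (Ws i) (cs i) ((g(0 := x)) i) ((g(0 := x)) (Suc i)))" for g y
    by (intro prod.cong refl) (simp add: upd)
  have top: "((g(Suc T := y))(0 := x)) (Suc T) = y" for g y
    by simp
  have ins: "{1..Suc T} = insert (Suc T) {1..T}" by auto
  have "dbn_visible n (Suc T) W B C Ws cs x =
      (\<Sum>g\<in>PiE {1..T} (\<lambda>_. cube n). \<Sum>y\<in>cube n. rbm_prob n W B C ((g(0 := x)) T) y *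
         (\<Prod>i<T. cond_prob n (Ws i) (cs i) ((g(0 := x)) i) ((g(0 := x)) (Suc i))))"
    unfolding dbn_visible_def dbn_joint_def diff_Suc_1 ins
    by (subst sum_PiE_insert) (simp_all only: upd[OF order_refl] top prefix, simp)
  also have "\<dots> = (\<Sum>g\<in>PiE {1..T} (\<lambda>_. cube n). (\<Sum>h\<in>cube n. rbm_prob n W B C ((g(0 := x)) T) h) *
         (\<Prod>i<T. cond_prob n (Ws i) (cs i) ((g(0 := x)) i) ((g(0 := x)) (Suc i))))"
    by (simp add: sum_distrib_right)
  also have "\<dots> = apply_kernels (\<lambda>i. cond_prob n (Ws i) (cs i)) (cube n) T
      (\<lambda>y. \<Sum>h\<in>cube n. rbm_prob n W B C y h) x"
    by (rule sum_paths_eq_apply_kernels[where f = "\<lambda>y. \<Sum>h\<in>cube n. rbm_prob n W B C y h"])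
  finally show ?thesis .
qed

definition sigmoid_limit :: "real \<Rightarrow> real \<Rightarrow> real" where
  "sigmoid_limit s c = (if s > 0 then 1 else if s < 0 then 0 else sigmoid c)"

lemma tendsto_sigmoid_scaled:
  "((\<lambda>K::nat. sigmoid (real K * s + c)) \<longlongrightarrow> sigmoid_limit s c) sequentially"
proof -
  consider "s > 0" | "s < 0" | "s = 0" by linarith
  then show ?thesis
    unfolding sigmoid_limit_def sigmoid_def by cases (simp_all, real_asymp+)
qed

lemma sigmoid_logit: "0 < p \<Longrightarrow> p < 1 \<Longrightarrow> sigmoid (ln (p / (1 - p))) = p"
  unfolding sigmoid_def by (simp add: exp_minus field_simps)

lemma tendsto_softmax_scaled:
  assumes "finite S" and "z \<in> S" and "\<And>s. s \<in> S \<Longrightarrow> U s \<le> c" and "s0 \<in> S" "U s0 = c"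
  shows "((\<lambda>K::nat. exp (real K * U z + V z) / (\<Sum>s\<in>S. exp (real K * U s + V s))) \<longlongrightarrow>
     (if U z = c then exp (V z) else 0) / (\<Sum>s\<in>{s\<in>S. U s = c}. exp (V s))) sequentially"
proof -
  \<comment> \<open>subtracting the maximum \<open>c\<close> leaves exponents that stay bounded or tend to \<open>-\<infinity>\<close>\<close>
  have shift: "exp (real K * U z + V z) / (\<Sum>s\<in>S. exp (real K * U s + V s))
      = exp (real K * (U z - c) + V z) / (\<Sum>s\<in>S. exp (real K * (U s - c) + V s))" for K
  proof -
    have "exp (real K * (U s - c) + V s) = exp (real K * U s + V s) * exp (- (real K * c))" for s
      by (simp add: algebra_simps mult_exp_exp)
    then show ?thesis by (simp add: sum_distrib_right[symmetric])
  qed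
  have exp_term: "((\<lambda>K::nat. exp (real K * (U s - c) + V s)) \<longlongrightarrow> (if U s = c then exp (V s) else 0)) sequentially"
    if "s \<in> S" for s
  proof (cases "U s = c")
    case False
    then have "U s - c < 0" using assms(3)[OF that] by simp
    then show ?thesis using False by real_asymp
  qed simp
  have "((\<lambda>K::nat. \<Sum>s\<in>S. exp (real K * (U s - c) + V s)) \<longlongrightarrow>
      (\<Sum>s\<in>S. if U s = c then exp (V s) else 0)) sequentially"
    by (intro tendsto_sum exp_term)
  moreover have "(\<Sum>s\<in>S. if U s = c then exp (V s) else 0) = (\<Sum>s\<in>{s\<in>S. U s = c}. exp (V s))"
    using assms(1) by (simp add: sum.inter_filter)
  moreover have "(\<Sum>s\<in>{s\<in>S. U s = c}. exp (V s)) > 0"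
    using assms by (intro sum_pos2[of _ s0]) auto
  ultimately show ?thesis unfolding shift
    by (intro tendsto_divide exp_term[OF assms(2)]) auto
qed

definition bit_prob :: "bool \<Rightarrow> real \<Rightarrow> real" where
  "bit_prob x q = (if x then q else 1 - q)"

lemma cond_prob_eq_prod_bit_prob:
  "cond_prob n Wi ci x y = (\<Prod>j<n. bit_prob (x j) (sigmoid ((\<Sum>k<n. Wi j k * of_bool (y k)) + ci j)))"
  unfolding cond_prob_def bit_prob_def Let_def ..

definition bit_affine :: "nat \<Rightarrow> ((nat \<Rightarrow> bool) \<Rightarrow> real) \<Rightarrow> bool" where
  "bit_affine n f \<longleftrightarrow> (\<exists>a c. \<forall>x. f x = (\<Sum>k<n. a k * of_bool (x k)) + c)"

definition affine_coeff :: "((nat \<Rightarrow> bool) \<Rightarrow> real) \<Rightarrow> nat \<Rightarrow> real" where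
  "affine_coeff f k = f (\<lambda>i. i = k) - f (\<lambda>_. False)"

lemma bit_affine_expansion:
  assumes "bit_affine n f"
  shows "f x = (\<Sum>k<n. affine_coeff f k * of_bool (x k)) + f (\<lambda>_. False)"
proof -
  obtain a c where f: "\<And>x. f x = (\<Sum>k<n. a k * of_bool (x k)) + c"
    using assms unfolding bit_affine_def by blast
  have "affine_coeff f k = a k" if "k < n" for k
  proof -
    have "(\<Sum>i<n. a i * of_bool (i = k)) = (\<Sum>i<n. if i = k then a i else 0)"
      by (rule sum.cong) auto
    then have "(\<Sum>i<n. a i * of_bool (i = k)) = a k"
      using that by simp
    then show ?thesis by (simp add: affine_coeff_def f)
  qed
  then show ?thesis by (simp add: f)
qed

lemma bit_affine_const: "bit_affine n (\<lambda>_. c)"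
  unfolding bit_affine_def by (rule exI[of _ "\<lambda>_. 0"]) auto

lemma bit_affine_bit:
  assumes "i < n"
  shows "bit_affine n (\<lambda>x. \<phi> (x i))"
proof -
  have expansion: "\<phi> (x i) = (\<Sum>k<n. (if k = i then \<phi> True - \<phi> False else 0) * of_bool (x k)) + \<phi> False"
    for x
    using assms by (cases "x i") (simp_all add: if_distrib[of "\<lambda>a. a * _"] sum.delta' cong: if_cong)
  show ?thesis unfolding bit_affine_def by (intro exI allI) (rule expansion)
qed

lemma bit_affine_add:
  assumes "bit_affine n f" "bit_affine n g"
  shows "bit_affine n (\<lambda>x. f x + g x)"
proof -
  obtain a c a' c' where "\<And>x. f x = (\<Sum>k<n. a k * of_bool (x k)) + c" "\<And>x. g x = (\<Sum>k<n. a' k * of_bool (x k)) + c'"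
    using assms unfolding bit_affine_def by metis
  then have expansion: "f x + g x = (\<Sum>k<n. (a k + a' k) * of_bool (x k)) + (c + c')" for x
    by (simp add: distrib_right sum.distrib)
  show ?thesis unfolding bit_affine_def by (intro exI allI) (rule expansion)
qed

lemma bit_affine_scale:
  assumes "bit_affine n f"
  shows "bit_affine n (\<lambda>x. c * f x)"
proof -
  obtain a d where f: "\<And>x. f x = (\<Sum>k<n. a k * of_bool (x k)) + d"
    using assms unfolding bit_affine_def by metis
  have expansion: "c * f x = (\<Sum>k<n. (c * a k) * of_bool (x k)) + c * d" for x
    by (simp only: f distrib_left sum_distrib_left mult.assoc)
  show ?thesis unfolding bit_affine_def by (intro exI allI) (rule expansion)
qed

lemma bit_affine_diff: "bit_affine n f \<Longrightarrow> bit_affine n g \<Longrightarrow> bit_affine n (\<lambda>x. f x - g x)"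
  using bit_affine_add[OF _ bit_affine_scale[of n g "-1"]] by simp

lemma bit_affine_sum: "(\<And>i. i \<in> I \<Longrightarrow> bit_affine n (f i)) \<Longrightarrow> bit_affine n (\<lambda>x. \<Sum>i\<in>I. f i x)"
proof (induction I rule: infinite_finite_induct)
  case (insert i I)
  then show ?case by (simp add: bit_affine_add)
qed (simp_all add: bit_affine_const)

lemma tendsto_cond_prob_affine:
  assumes "\<And>j. j < n \<Longrightarrow> bit_affine n (slope j)" and "\<And>j. j < n \<Longrightarrow> bit_affine n (offset j)"
  shows "((\<lambda>K::nat. cond_prob n (\<lambda>j k. real K * affine_coeff (slope j) k + affine_coeff (offset j) k)
            (\<lambda>j. real K * slope j (\<lambda>_. False) + offset j (\<lambda>_. False)) x y)
          \<longlongrightarrow> (\<Prod>j<n. bit_prob (x j) (sigmoid_limit (slope j y) (offset j y)))) sequentially"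
proof -
  have preact: "(\<Sum>k<n. (real K * affine_coeff (slope j) k + affine_coeff (offset j) k) * of_bool (y k))
      + (real K * slope j (\<lambda>_. False) + offset j (\<lambda>_. False)) = real K * slope j y + offset j y" if "j < n" for K j
    using bit_affine_expansion[OF assms(1)[OF that], of y] bit_affine_expansion[OF assms(2)[OF that], of y]
    by (simp add: distrib_right sum.distrib sum_distrib_left algebra_simps)
  show ?thesis
    unfolding cond_prob_eq_prod_bit_prob bit_prob_def
    by (intro tendsto_prod) (simp add: preact tendsto_sigmoid_scaled tendsto_diff)
qed

lemma rbm_energy_scaled:
  "rbm_energy n (\<lambda>j k. K * W j k + W' j k) (\<lambda>k. K * B k + B' k) (\<lambda>j. K * C j + C' j) v h =
     K * rbm_energy n W B C v h + rbm_energy n W' B' C' v h"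
  unfolding rbm_energy_def
  by (simp only: distrib_left distrib_right sum.distrib sum_distrib_left mult.assoc mult.commute
      mult.left_commute add.assoc add.commute add.left_commute)

lemma rbm_energy_affine:
  assumes "bit_affine n b" and "\<And>j. j < n \<Longrightarrow> bit_affine n (a j)"
  shows "rbm_energy n (\<lambda>j. affine_coeff (a j)) (affine_coeff b) (\<lambda>j. a j (\<lambda>_. False)) v h =
    b v - b (\<lambda>_. False) + (\<Sum>j<n. of_bool (h j) * a j v)"
proof -
  have "(\<Sum>k<n. of_bool (h j) * affine_coeff (a j) k * of_bool (v k)) + a j (\<lambda>_. False) * of_bool (h j)
      = of_bool (h j) * a j v" if "j < n" for j
    by (subst bit_affine_expansion[OF assms(2)[OF that], of v]) (simp add: distrib_left sum_distrib_left mult_ac)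
  then have "(\<Sum>j<n. \<Sum>k<n. of_bool (h j) * affine_coeff (a j) k * of_bool (v k)) + (\<Sum>j<n. a j (\<lambda>_. False) * of_bool (h j))
      = (\<Sum>j<n. of_bool (h j) * a j v)"
    by (simp add: sum.distrib[symmetric])
  then show ?thesis
    unfolding rbm_energy_def using bit_affine_expansion[OF assms(1), of v] by simp
qed

lemma tendsto_rbm_prob:
  fixes n :: nat and W W' :: "nat \<Rightarrow> nat \<Rightarrow> real" and B B' C C' :: "nat \<Rightarrow> real"
  defines "E \<equiv> \<lambda>s. rbm_energy n W B C (fst s) (snd s)"
    and "E' \<equiv> \<lambda>s. rbm_energy n W' B' C' (fst s) (snd s)"
  assumes "\<And>s. s \<in> cube n \<times> cube n \<Longrightarrow> E s \<le> c" and "s0 \<in> cube n \<times> cube n" "E s0 = c"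
    and "v \<in> cube n" "h \<in> cube n"
  shows "((\<lambda>K::nat. rbm_prob n (\<lambda>j k. real K * W j k + W' j k) (\<lambda>k. real K * B k + B' k)
            (\<lambda>j. real K * C j + C' j) v h)
          \<longlongrightarrow> (if E (v, h) = c then exp (E' (v, h)) else 0) /
              (\<Sum>s\<in>{s\<in>cube n \<times> cube n. E s = c}. exp (E' s))) sequentially"
proof -
  have "rbm_prob n (\<lambda>j k. real K * W j k + W' j k) (\<lambda>k. real K * B k + B' k) (\<lambda>j. real K * C j + C' j) v h
      = exp (real K * E (v, h) + E' (v, h)) / (\<Sum>s\<in>cube n \<times> cube n. exp (real K * E s + E' s))" for K
    unfolding rbm_prob_def rbm_energy_scaled E_def E'_def by (simp add: case_prod_unfold)
  moreover have "((\<lambda>K::nat. exp (real K * E (v, h) + E' (v, h)) / (\<Sum>s\<in>cube n \<times> cube n. exp (real K * E s + E' s)))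
      \<longlongrightarrow> (if E (v, h) = c then exp (E' (v, h)) else 0) / (\<Sum>s\<in>{s\<in>cube n \<times> cube n. E s = c}. exp (E' s)))
      sequentially"
    using assms(3-) by (intro tendsto_softmax_scaled) (auto simp: finite_cube)
  ultimately show ?thesis by simp
qed

lemma prod_bit_prob_deterministic:
  assumes "z \<in> cube n" "x \<in> cube n" and "\<And>j. j < n \<Longrightarrow> q j = of_bool (x j)"
  shows "(\<Prod>j<n. bit_prob (z j) (q j)) = of_bool (z = x)"
proof -
  have "(\<Prod>j<n. bit_prob (z j) (q j)) = (\<Prod>j<n. of_bool (z j = x j))"
    using assms(3) by (intro prod.cong) (auto simp: bit_prob_def)
  also have "\<dots> = of_bool (\<forall>j<n. z j = x j)" by (auto simp: prod_of_bool)
  also have "\<dots> = of_bool (z = x)" using cube_eq_iff[OF assms(1,2)] by simp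
  finally show ?thesis .
qed

lemma prod_bit_prob_one_random:
  assumes z: "z \<in> cube n" and x: "x \<in> cube n" and j0: "j0 < n"
    and q: "\<And>j. j < n \<Longrightarrow> j \<noteq> j0 \<Longrightarrow> q j = of_bool (x j)"
  shows "(\<Prod>j<n. bit_prob (z j) (q j)) =
    of_bool (z = x) * bit_prob (x j0) (q j0) + of_bool (z = x(j0 := \<not> x j0)) * bit_prob (\<not> x j0) (q j0)"
proof -
  let ?agree = "\<forall>j\<in>{..<n} - {j0}. z j = x j"
  have "(\<Prod>j<n. bit_prob (z j) (q j)) = bit_prob (z j0) (q j0) * (\<Prod>j\<in>{..<n} - {j0}. bit_prob (z j) (q j))"
    using j0 by (subst prod.remove[of _ j0]) auto
  also have "(\<Prod>j\<in>{..<n} - {j0}. bit_prob (z j) (q j)) = (\<Prod>j\<in>{..<n} - {j0}. of_bool (z j = x j))"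
    using q by (intro prod.cong) (auto simp: bit_prob_def)
  finally have split: "(\<Prod>j<n. bit_prob (z j) (q j)) = bit_prob (z j0) (q j0) * of_bool ?agree"
    by (simp add: prod_of_bool)
  have flip: "x(j0 := \<not> x j0) \<in> cube n" using x j0 by (auto simp: cube_def)
  have "z = x \<longleftrightarrow> ?agree \<and> z j0 = x j0" "z = x(j0 := \<not> x j0) \<longleftrightarrow> ?agree \<and> z j0 \<noteq> x j0"
    using cube_eq_iff[OF z x] cube_eq_iff[OF z flip] j0 by auto
  then show ?thesis unfolding split by (cases ?agree; cases "z j0"; cases "x j0") auto
qed

section \<open>Approximation by a positive distribution\<close>

lemma KL_div_of_pos:
  assumes "\<forall>x\<in>cube n. q x > 0"
  shows "KL_div n p q = ereal (\<Sum>x\<in>{x\<in>cube n. 0 < p x}. p x * ln (p x / q x))"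
  using assms unfolding KL_div_def by force

lemma exists_positive_KL_div_less:
  assumes p: "is_distribution n p" and \<epsilon>: "\<epsilon> > 0"
  shows "\<exists>r. (\<forall>x\<in>cube n. r x > 0) \<and> (\<Sum>x\<in>cube n. r x) = 1 \<and> KL_div n p r < ereal \<epsilon>"
proof -
  \<comment> \<open>mix \<open>p\<close> with the uniform distribution, with weight \<open>\<eta>\<close> chosen so that \<open>ln (1 / (1 - \<eta>)) = \<epsilon> / 2\<close>\<close>
  define \<eta> where "\<eta> = 1 - exp (-(\<epsilon>/2))"
  have \<eta>: "0 < \<eta>" "\<eta> < 1" using \<epsilon> by (auto simp: \<eta>_def)
  define r where "r x = (1 - \<eta>) * p x + \<eta> / 2^n" for x
  have p0: "\<forall>x\<in>cube n. 0 \<le> p x" and p1: "(\<Sum>x\<in>cube n. p x) = 1"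
    using p by (auto simp: is_distribution_def)
  have r_pos: "\<forall>x\<in>cube n. r x > 0" using p0 \<eta> by (auto simp: r_def intro!: add_nonneg_pos)
  have r_sum: "(\<Sum>x\<in>cube n. r x) = 1"
    using p1 \<eta> card_cube[of n] by (simp add: r_def sum.distrib sum_distrib_left[symmetric])
  have summand: "p x * ln (p x / r x) \<le> p x * (\<epsilon>/2)" if "x \<in> cube n" "0 < p x" for x
  proof -
    have "p x / r x \<le> p x / ((1 - \<eta>) * p x)"
      using that \<eta> r_pos by (intro divide_left_mono) (auto simp: r_def)
    also have "\<dots> = exp (\<epsilon>/2)" using that \<eta> by (simp add: \<eta>_def exp_minus field_simps)
    finally have "ln (p x / r x) \<le> ln (exp (\<epsilon>/2))"
      using that r_pos by (subst ln_le_cancel_iff) auto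
    then show ?thesis using that by (intro mult_left_mono) auto
  qed
  have "(\<Sum>x\<in>{x\<in>cube n. 0 < p x}. p x * ln (p x / r x)) \<le> (\<Sum>x\<in>{x\<in>cube n. 0 < p x}. p x) * (\<epsilon>/2)"
    unfolding sum_distrib_right using summand by (intro sum_mono) auto
  also have "(\<Sum>x\<in>{x\<in>cube n. 0 < p x}. p x) = 1"
    using p0 p1 finite_cube[of n] by (subst sum.mono_neutral_left[of "cube n"]) force+
  finally have "(\<Sum>x\<in>{x\<in>cube n. 0 < p x}. p x * ln (p x / r x)) < \<epsilon>" using \<epsilon> by simp
  then show ?thesis using r_pos r_sum by (auto simp: KL_div_of_pos)
qed

lemma KL_div_less_of_tendsto:
  assumes pos: "\<forall>x\<in>cube n. r x > 0" and lim: "\<forall>x\<in>cube n. ((\<lambda>K. q K x) \<longlongrightarrow> r x) sequentially"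
    and less: "KL_div n p r < ereal \<epsilon>"
  shows "\<exists>K. KL_div n p (q K) < ereal \<epsilon>"
proof -
  let ?D = "\<lambda>q. \<Sum>x\<in>{x\<in>cube n. 0 < p x}. p x * ln (p x / q x)"
  have pos_eventually: "\<forall>\<^sub>F K in sequentially. \<forall>x\<in>cube n. q K x > 0"
    using pos lim finite_cube by (intro eventually_ball_finite) (auto intro: order_tendstoD)
  have "((\<lambda>K. ?D (q K)) \<longlongrightarrow> ?D r) sequentially"
    using lim pos by (intro tendsto_intros) auto
  moreover have "?D r < \<epsilon>" using less pos by (simp add: KL_div_of_pos)
  ultimately have less_eventually: "\<forall>\<^sub>F K in sequentially. ?D (q K) < \<epsilon>"
    by (rule order_tendstoD)
  obtain K where "\<forall>x\<in>cube n. q K x > 0" "?D (q K) < \<epsilon>"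
    using eventually_happens'[OF _ eventually_conj[OF pos_eventually less_eventually]] by auto
  then have "KL_div n p (q K) < ereal \<epsilon>" by (simp add: KL_div_of_pos)
  then show ?thesis ..
qed

section \<open>Gray codes\<close>

definition gray_code :: "nat \<Rightarrow> (nat \<Rightarrow> nat \<Rightarrow> bool) \<Rightarrow> (nat \<Rightarrow> nat) \<Rightarrow> bool" where
  "gray_code k P \<delta> \<longleftrightarrow> (\<forall>t<2^k. P t \<in> cube k) \<and> inj_on P {..<2^k} \<and>
     (\<forall>t. Suc t < 2^k \<longrightarrow> \<delta> t < k \<and> P (Suc t) = (P t)(\<delta> t := \<not> P t (\<delta> t)))"

definition reflected_code :: "nat \<Rightarrow> (nat \<Rightarrow> nat \<Rightarrow> bool) \<Rightarrow> nat \<Rightarrow> nat \<Rightarrow> bool" where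
  "reflected_code k P t = (if t < 2^k then P t else (P (2^Suc k - 1 - t))(k := True))"

definition reflected_flips :: "nat \<Rightarrow> (nat \<Rightarrow> nat) \<Rightarrow> nat \<Rightarrow> nat" where
  "reflected_flips k \<delta> t = (if Suc t < 2^k then \<delta> t else if Suc t = 2^k then k else \<delta> (2^Suc k - 2 - t))"

lemma inj_on_reflected_code:
  assumes code: "\<forall>t<2^k. P t \<in> cube k" and inj: "inj_on P {..<2^k}"
  shows "inj_on (reflected_code k P) {..<2^Suc k}"
proof (rule inj_onI)
  fix t t' assume t: "t \<in> {..<2^Suc k}" and t': "t' \<in> {..<2^Suc k}"
    and eq: "reflected_code k P t = reflected_code k P t'"
  have top: "\<not> P s k" if "s < 2^k" for s using code that by (auto simp: cube_def)
  consider "t < 2^k" "t' < 2^k" | "t < 2^k \<longleftrightarrow> \<not> t' < 2^k" | "\<not> t < 2^k" "\<not> t' < 2^k" by blast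
  then show "t = t'"
  proof cases
    case 1
    then show ?thesis using eq inj by (auto simp: reflected_code_def inj_on_def)
  next
    case 2
    then show ?thesis using fun_cong[OF eq, of k] top by (auto simp: reflected_code_def)
  next
    case 3
    have l: "2^Suc k - 1 - t < 2^k" "2^Suc k - 1 - t' < 2^k" using 3 t t' by auto
    have "P (2^Suc k - 1 - t) i = P (2^Suc k - 1 - t') i" for i
      using fun_cong[OF eq, of i] 3 top[OF l(1)] top[OF l(2)]
      by (cases "i = k") (auto simp: reflected_code_def)
    then have "P (2^Suc k - 1 - t) = P (2^Suc k - 1 - t')" by (rule ext)
    then have "2^Suc k - 1 - t = 2^Suc k - 1 - t'" using inj l by (auto simp: inj_on_def)
    then show ?thesis using t t' by auto
  qed
qed

lemma reflected_code_step:
  assumes code: "\<forall>t<2^k. P t \<in> cube k"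
    and step: "\<forall>t. Suc t < 2^k \<longrightarrow> \<delta> t < k \<and> P (Suc t) = (P t)(\<delta> t := \<not> P t (\<delta> t))"
    and t: "Suc t < 2^Suc k"
  shows "reflected_flips k \<delta> t < Suc k \<and> reflected_code k P (Suc t) =
    (reflected_code k P t)(reflected_flips k \<delta> t := \<not> reflected_code k P t (reflected_flips k \<delta> t))"
proof -
  consider "Suc t < 2^k" | "Suc t = 2^k" | "Suc t > 2^k" by linarith
  then show ?thesis
  proof cases
    case 1
    then show ?thesis using step by (auto simp: reflected_code_def reflected_flips_def)
  next
    case 2
    then have "2^Suc k - 1 - Suc t = t" "\<not> P t k" using code by (auto simp: cube_def)
    then show ?thesis using 2 by (auto simp: reflected_code_def reflected_flips_def fun_eq_iff)
  next
    case 3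
    \<comment> \<open>on the reflected half, step \<open>t\<close> undoes step \<open>s\<close> of the original code\<close>
    define s where "s = 2^Suc k - 2 - t"
    have s: "Suc s < 2^k" "2^Suc k - 1 - Suc t = s" "2^Suc k - 1 - t = Suc s"
      using 3 t by (auto simp: s_def)
    then have "\<delta> s < k" "P (Suc s) = (P s)(\<delta> s := \<not> P s (\<delta> s))" using step by auto
    then show ?thesis using 3 s by (auto simp: reflected_code_def reflected_flips_def s_def fun_eq_iff)
  qed
qed

lemma gray_code_reflect:
  assumes "gray_code k P \<delta>"
  shows "gray_code (Suc k) (reflected_code k P) (reflected_flips k \<delta>)"
proof -
  have code: "\<forall>t<2^k. P t \<in> cube k" and inj: "inj_on P {..<2^k}"
    and step: "\<forall>t. Suc t < 2^k \<longrightarrow> \<delta> t < k \<and> P (Suc t) = (P t)(\<delta> t := \<not> P t (\<delta> t))"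
    using assms by (auto simp: gray_code_def)
  have "reflected_code k P t \<in> cube (Suc k)" if "t < 2^Suc k" for t
  proof (cases "t < 2^k")
    case False
    then have "2^Suc k - 1 - t < 2^k" using that by auto
    then show ?thesis using code False by (auto simp: reflected_code_def cube_def)
  qed (use code in \<open>auto simp: reflected_code_def cube_def\<close>)
  then show ?thesis
    unfolding gray_code_def using inj_on_reflected_code[OF code inj] reflected_code_step[OF code step]
    by blast
qed

lemma gray_code_exists: "\<exists>P \<delta>. gray_code k P \<delta>"
proof (induction k)
  case 0
  show ?case by (rule exI[of _ "\<lambda>_ _. False"]) (auto simp: gray_code_def cube_def inj_on_def)
next
  case (Suc k)
  then show ?case using gray_code_reflect by blast
qed

section \<open>Decomposing the cube into chains\<close>

lemma rotate_mod_eq_iff: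
  fixes i e g d :: nat
  assumes i: "i < d" and e: "e < d" and g: "g < d"
  shows "(i + d - g) mod d = e \<longleftrightarrow> i = (e + g) mod d"
proof -
  have "(e + g) mod d = (if e + g < d then e + g else e + g - d)"
  proof (cases "e + g < d")
    case False
    then have "(e + g) mod d = (e + g - d) mod d" by (simp add: le_mod_geq)
    also have "\<dots> = e + g - d" using e g by (intro mod_less) linarith
    finally show ?thesis using False by simp
  qed simp
  moreover have "(i + d - g) mod d = (if g \<le> i then i - g else i + d - g)"
  proof (cases "g \<le> i")
    case True
    then have "(i + d - g) mod d = (i - g + d) mod d" by (simp add: algebra_simps)
    also have "\<dots> = i - g" using i by simp
    finally show ?thesis using True by simp
  next
    case False
    then show ?thesis using i by simp
  qed
  ultimately show ?thesis using i e g by auto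
qed

locale chain_decomposition =
  fixes d c n :: nat and P :: "nat \<Rightarrow> nat \<Rightarrow> bool" and \<delta> :: "nat \<Rightarrow> nat"
    and label :: "nat \<Rightarrow> nat \<Rightarrow> bool"
  assumes n_eq: "n = d + Suc c"
    and gray: "gray_code d P \<delta>"
    and label: "bij_betw label {..<d} (cube c)"
begin

lemma d_eq: "d = 2 ^ c"
  using bij_betw_same_card[OF label] card_cube by simp

lemma d_pos: "0 < d" using d_eq by simp

lemma d_less_n: "d < n" using n_eq by simp

lemma code_cube: "t < 2^d \<Longrightarrow> P t \<in> cube d"
  and code_inj: "inj_on P {..<2^d}"
  and code_step: "Suc t < 2^d \<Longrightarrow> \<delta> t < d \<and> P (Suc t) = (P t)(\<delta> t := \<not> P t (\<delta> t))"
  using gray by (auto simp: gray_code_def)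

definition flip_coord :: "nat \<Rightarrow> nat \<Rightarrow> nat" where
  "flip_coord g t = (\<delta> t + g) mod d"

text \<open>The group whose chain flips coordinate \<open>j\<close> at step \<open>t\<close>.\<close>
definition flipping_group :: "nat \<Rightarrow> nat \<Rightarrow> nat" where
  "flipping_group t j = (j + d - \<delta> t) mod d"

definition chain_state :: "nat \<Rightarrow> bool \<Rightarrow> nat \<Rightarrow> nat \<Rightarrow> bool" where
  "chain_state g b t k =
     (if k < d then P t ((k + d - g) mod d) else if k = d then b else label g (k - Suc d))"

definition chain_index :: "(nat \<times> bool \<times> nat) set" where
  "chain_index = {..<d} \<times> UNIV \<times> {..<2^d}"

definition chain_state_of :: "nat \<times> bool \<times> nat \<Rightarrow> nat \<Rightarrow> bool" where
  "chain_state_of = (\<lambda>(g, b, t). chain_state g b t)"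

lemma flip_coord_less: "flip_coord g t < d"
  using d_pos by (simp add: flip_coord_def)

lemma flipping_group_less: "flipping_group t j < d"
  using d_pos by (simp add: flipping_group_def)

lemma flipping_group_iff:
  "g < d \<Longrightarrow> j < d \<Longrightarrow> Suc t < 2^d \<Longrightarrow> flipping_group t j = g \<longleftrightarrow> j = flip_coord g t"
  unfolding flipping_group_def flip_coord_def
  using rotate_mod_eq_iff[of j d g "\<delta> t"] code_step by (simp add: add.commute)

lemma flipping_group_flip_coord: "g < d \<Longrightarrow> Suc t < 2^d \<Longrightarrow> flipping_group t (flip_coord g t) = g"
  using flipping_group_iff flip_coord_less by blast

lemma chain_state_cube: "g < d \<Longrightarrow> chain_state g b t \<in> cube n"
proof -
  assume "g < d"
  then have "label g \<in> cube c" using label by (auto simp: bij_betw_def)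
  then show ?thesis unfolding cube_def chain_state_def using n_eq
    by (auto dest!: spec[of _ "_ - Suc d"])
qed

lemma chain_state_chain_bit [simp]: "chain_state g b t d = b"
  by (simp add: chain_state_def)

lemma chain_state_upd: "chain_state g b t = (chain_state g False t)(d := b)"
  by (auto simp: chain_state_def fun_eq_iff)

lemma chain_state_step:
  assumes g: "g < d" and t: "Suc t < 2^d"
  shows "chain_state g b (Suc t) = (chain_state g b t)(flip_coord g t := \<not> chain_state g b t (flip_coord g t))"
proof
  fix k
  have \<delta>: "\<delta> t < d" and step: "P (Suc t) = (P t)(\<delta> t := \<not> P t (\<delta> t))" using code_step t by auto
  show "chain_state g b (Suc t) k = ((chain_state g b t)(flip_coord g t := \<not> chain_state g b t (flip_coord g t))) k"
  proof (cases "k < d")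
    case True
    have "(k + d - g) mod d = \<delta> t \<longleftrightarrow> k = flip_coord g t"
      using rotate_mod_eq_iff[OF True \<delta> g] by (simp add: flip_coord_def)
    moreover have "(flip_coord g t + d - g) mod d = \<delta> t"
      using rotate_mod_eq_iff[OF flip_coord_less \<delta> g] by (simp add: flip_coord_def)
    ultimately show ?thesis using True step flip_coord_less by (auto simp: chain_state_def)
  qed (use flip_coord_less[of g t] in \<open>auto simp: chain_state_def\<close>)
qed

lemma chain_state_inj:
  assumes g: "g < d" "g' < d" and t: "t < 2^d" "t' < 2^d"
    and eq: "chain_state g b t = chain_state g' b' t'"
  shows "g = g' \<and> b = b' \<and> t = t'"
proof -
  have b: "b = b'" using fun_cong[OF eq, of d] by simp
  have "label g = label g'"
    using fun_cong[OF eq, of "_ + Suc d"] by (auto simp: chain_state_def)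
  then have gg: "g = g'" using label g by (auto simp: bij_betw_def inj_on_def)
  have "P t k = P t' k" for k
  proof (cases "k < d")
    case True
    define i where "i = (k + g) mod d"
    have i: "i < d" using d_pos by (simp add: i_def)
    have "(i + d - g) mod d = k" using rotate_mod_eq_iff[OF i True g(1)] by (simp add: i_def)
    then show ?thesis using fun_cong[OF eq, of i] i gg by (simp add: chain_state_def)
  qed (use code_cube t in \<open>auto simp: cube_def\<close>)
  then have "P t = P t'" ..
  then have "t = t'" using code_inj t by (auto simp: inj_on_def)
  then show ?thesis using b gg by simp
qed

lemma bij_chain_state: "bij_betw chain_state_of chain_index (cube n)"
proof -
  have inj: "inj_on chain_state_of chain_index"
    using chain_state_inj by (auto simp: inj_on_def chain_index_def chain_state_of_def)
  have "card chain_index = d * (2 * 2^d)" by (simp add: chain_index_def card_cartesian_product)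
  also have "\<dots> = 2^n" using d_eq by (simp add: n_eq power_add)
  finally have "card (chain_state_of ` chain_index) = card (cube n)"
    using card_image[OF inj] card_cube by simp
  moreover have "chain_state_of ` chain_index \<subseteq> cube n"
    using chain_state_cube by (auto simp: chain_index_def chain_state_of_def)
  ultimately have "chain_state_of ` chain_index = cube n"
    using finite_cube by (intro card_subset_eq) auto
  then show ?thesis using inj by (simp add: bij_betw_def)
qed

lemma sum_chain_index: "(\<Sum>i\<in>chain_index. f i) = (\<Sum>g<d. \<Sum>b\<in>UNIV. \<Sum>t<2^d. f (g, b, t))"
  unfolding chain_index_def by (simp add: sum.cartesian_product)

lemma sum_cube_eq_sum_chains: "(\<Sum>x\<in>cube n. f x) = (\<Sum>g<d. \<Sum>b\<in>UNIV. \<Sum>t<2^d. f (chain_state g b t))"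
  using sum.reindex_bij_betw[OF bij_chain_state, of f] by (simp add: sum_chain_index chain_state_of_def)

end

section \<open>Sharing layers\<close>

locale chain_transport = chain_decomposition +
  fixes r :: "(nat \<Rightarrow> bool) \<Rightarrow> real"
  assumes r_pos: "\<And>x. x \<in> cube n \<Longrightarrow> r x > 0" and r_sum: "(\<Sum>x\<in>cube n. r x) = 1"
begin

definition tail_mass :: "nat \<Rightarrow> bool \<Rightarrow> nat \<Rightarrow> real" where
  "tail_mass g b u = (\<Sum>t\<in>{u..<2^d}. r (chain_state g b t))"

definition stage_weight :: "nat \<Rightarrow> nat \<times> bool \<times> nat \<Rightarrow> real" where
  "stage_weight u = (\<lambda>(g, b, t). if t < u then r (chain_state g b t) else if t = u then tail_mass g b u else 0)"

definition stage_dist :: "nat \<Rightarrow> (nat \<Rightarrow> bool) \<Rightarrow> real" where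
  "stage_dist u x = (\<Sum>i\<in>chain_index. if chain_state_of i = x then stage_weight u i else 0)"

definition stay_prob :: "nat \<Rightarrow> bool \<Rightarrow> nat \<Rightarrow> real" where
  "stay_prob g b u = r (chain_state g b u) / tail_mass g b u"

definition move_prob :: "nat \<Rightarrow> bool \<Rightarrow> nat \<Rightarrow> real" where
  "move_prob g b u = tail_mass g b (Suc u) / tail_mass g b u"

lemma r_chain_state_pos: "g < d \<Longrightarrow> r (chain_state g b t) > 0"
  using r_pos chain_state_cube by auto

lemma tail_mass_pos: "g < d \<Longrightarrow> u < 2^d \<Longrightarrow> tail_mass g b u > 0"
  unfolding tail_mass_def using r_chain_state_pos by (intro sum_pos) auto

lemma tail_mass_Suc: "u < 2^d \<Longrightarrow> tail_mass g b u = r (chain_state g b u) + tail_mass g b (Suc u)"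
  unfolding tail_mass_def by (subst sum.atLeast_Suc_lessThan) auto

lemma sum_tail_mass_start: "(\<Sum>g<d. \<Sum>b\<in>UNIV. tail_mass g b 0) = 1"
  using r_sum by (simp add: tail_mass_def sum_cube_eq_sum_chains atLeast0LessThan)

lemma stay_move_prob:
  assumes g: "g < d" and u: "Suc u < 2^d"
  shows "0 < stay_prob g b u" "stay_prob g b u < 1" "move_prob g b u = 1 - stay_prob g b u"
    "stay_prob g b u * tail_mass g b u = r (chain_state g b u)"
    "move_prob g b u * tail_mass g b u = tail_mass g b (Suc u)"
proof -
  have pos: "r (chain_state g b u) > 0" "tail_mass g b (Suc u) > 0"
    using r_chain_state_pos tail_mass_pos g u by auto
  then show "0 < stay_prob g b u" "stay_prob g b u < 1" "move_prob g b u = 1 - stay_prob g b u"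
    "stay_prob g b u * tail_mass g b u = r (chain_state g b u)"
    "move_prob g b u * tail_mass g b u = tail_mass g b (Suc u)"
    unfolding stay_prob_def move_prob_def tail_mass_Suc[OF Suc_lessD[OF u]] by (auto simp: field_simps)
qed

text \<open>Layer \<open>u\<close> moves each state \<open>u\<close> of a chain one step on with probability \<open>move_prob\<close> and copies
  every other state. Bit \<open>j < d\<close> is flipped by exactly one chain, whose state \<open>u\<close> (with chain
  bit \<open>False\<close>) is \<open>head_pattern u j\<close>; from that state bit \<open>j\<close> becomes \<open>1\<close> with probability
  \<open>head_bit_prob\<close>, since staying keeps it and moving flips it.\<close>
definition head_pattern :: "nat \<Rightarrow> nat \<Rightarrow> nat \<Rightarrow> bool" where
  "head_pattern u j = chain_state (flipping_group u j) False u"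

definition is_head :: "nat \<Rightarrow> nat \<Rightarrow> (nat \<Rightarrow> bool) \<Rightarrow> bool" where
  "is_head u j x \<longleftrightarrow> j < d \<and> (\<exists>b. x = chain_state (flipping_group u j) b u)"

definition head_bit_prob :: "nat \<Rightarrow> nat \<Rightarrow> bool \<Rightarrow> real" where
  "head_bit_prob u j b =
     (if head_pattern u j j then stay_prob (flipping_group u j) b u else move_prob (flipping_group u j) b u)"

definition other_mismatches :: "nat \<Rightarrow> nat \<Rightarrow> (nat \<Rightarrow> bool) \<Rightarrow> real" where
  "other_mismatches u j x = (\<Sum>k<n. if k = j \<or> k = d then 0 else of_bool (x k \<noteq> head_pattern u j k))"

text \<open>The slope of bit \<open>j\<close> vanishes exactly at the heads; elsewhere its sign is that of \<open>x j\<close>, since a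
  mismatch in bit \<open>j\<close> (weight \<open>n\<close>) outweighs all others (weight \<open>1\<close> each).\<close>
definition layer_slope :: "nat \<Rightarrow> nat \<Rightarrow> (nat \<Rightarrow> bool) \<Rightarrow> real" where
  "layer_slope u j x =
     (if j < d then (if head_pattern u j j then 1 else -1) *
        (other_mismatches u j x - real n * of_bool (x j \<noteq> head_pattern u j j))
      else if x j then 1 else -1)"

definition layer_offset :: "nat \<Rightarrow> nat \<Rightarrow> (nat \<Rightarrow> bool) \<Rightarrow> real" where
  "layer_offset u j x = (if j < d then ln (head_bit_prob u j (x d) / (1 - head_bit_prob u j (x d))) else 0)"

definition sharing_kernel :: "nat \<Rightarrow> (nat \<Rightarrow> bool) \<Rightarrow> (nat \<Rightarrow> bool) \<Rightarrow> real" where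
  "sharing_kernel u z y = (\<Prod>j<n. bit_prob (z j) (sigmoid_limit (layer_slope u j y) (layer_offset u j y)))"

lemma bit_affine_layer_slope:
  assumes "j < n"
  shows "bit_affine n (layer_slope u j)"
proof (cases "j < d")
  case True
  have "bit_affine n (other_mismatches u j)"
    unfolding other_mismatches_def by (intro bit_affine_sum bit_affine_bit) auto
  moreover have "bit_affine n (\<lambda>x. real n * of_bool (x j \<noteq> head_pattern u j j))"
    using True d_less_n by (intro bit_affine_bit) auto
  ultimately have "bit_affine n (\<lambda>x. other_mismatches u j x - real n * of_bool (x j \<noteq> head_pattern u j j))"
    by (rule bit_affine_diff)
  then show ?thesis unfolding layer_slope_def if_P[OF True] by (rule bit_affine_scale)
next
  case False
  then show ?thesis
    using bit_affine_bit[OF assms, of "\<lambda>b. if b then 1 else -1"] unfolding layer_slope_def by simp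
qed

lemma bit_affine_layer_offset: "bit_affine n (layer_offset u j)"
  unfolding layer_offset_def using d_less_n by (auto intro: bit_affine_bit simp: bit_affine_const)

lemma other_mismatches_nonneg: "0 \<le> other_mismatches u j x"
  unfolding other_mismatches_def by (intro sum_nonneg) auto

lemma other_mismatches_less: "j < n \<Longrightarrow> other_mismatches u j x < real n"
proof -
  assume j: "j < n"
  have "other_mismatches u j x \<le> (\<Sum>k<n. 1 - of_bool (k = j))"
    unfolding other_mismatches_def by (intro sum_mono) auto
  also have "\<dots> = real n - 1" using j by (simp add: sum_subtractf)
  finally show ?thesis by simp
qed

lemma is_head_iff:
  assumes x: "x \<in> cube n" and j: "j < d"
  shows "is_head u j x \<longleftrightarrow> x j = head_pattern u j j \<and> other_mismatches u j x = 0"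
proof -
  have "other_mismatches u j x = 0 \<longleftrightarrow> (\<forall>k<n. k \<noteq> j \<longrightarrow> k \<noteq> d \<longrightarrow> x k = head_pattern u j k)"
    unfolding other_mismatches_def by (subst sum_nonneg_eq_0_iff) auto
  moreover have "x = chain_state (flipping_group u j) b u \<longleftrightarrow> (\<forall>k<n. x k = ((head_pattern u j)(d := b)) k)" for b
    unfolding head_pattern_def chain_state_upd[symmetric]
    using cube_eq_iff[OF x chain_state_cube[OF flipping_group_less]] by blast
  ultimately show ?thesis
    unfolding is_head_def using j d_less_n by (auto simp: fun_upd_def)
qed

lemma head_bit_prob_bounds: "Suc u < 2^d \<Longrightarrow> 0 < head_bit_prob u j b \<and> head_bit_prob u j b < 1"
  using stay_move_prob[OF flipping_group_less] by (auto simp: head_bit_prob_def)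

lemma sigmoid_limit_at_head:
  assumes u: "Suc u < 2^d" and x: "x \<in> cube n" and head: "is_head u j x"
  shows "sigmoid_limit (layer_slope u j x) (layer_offset u j x) = head_bit_prob u j (x d)"
proof -
  have j: "j < d" using head by (auto simp: is_head_def)
  then have "layer_slope u j x = 0" using head is_head_iff[OF x j] by (simp add: layer_slope_def)
  then show ?thesis
    using j head_bit_prob_bounds[OF u] by (simp add: sigmoid_limit_def layer_offset_def sigmoid_logit)
qed

lemma sigmoid_limit_off_head:
  assumes x: "x \<in> cube n" and j: "j < n" and not_head: "\<not> is_head u j x"
  shows "sigmoid_limit (layer_slope u j x) (layer_offset u j x) = of_bool (x j)"
proof (cases "j < d")
  case True
  have "0 \<le> other_mismatches u j x" "other_mismatches u j x < real n"
    using other_mismatches_nonneg other_mismatches_less[OF j] by auto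
  moreover have "\<not> (x j = head_pattern u j j \<and> other_mismatches u j x = 0)"
    using is_head_iff[OF x True] not_head by simp
  ultimately show ?thesis
    using True by (cases "head_pattern u j j"; cases "x j") (auto simp: sigmoid_limit_def layer_slope_def)
qed (simp add: sigmoid_limit_def layer_slope_def)

lemma is_head_chain_state:
  assumes u: "Suc u < 2^d" and g: "g < d" and t: "t < 2^d"
  shows "is_head u j (chain_state g b t) \<longleftrightarrow> t = u \<and> j = flip_coord g u"
proof
  assume "is_head u j (chain_state g b t)"
  then obtain b' where j: "j < d" and eq: "chain_state g b t = chain_state (flipping_group u j) b' u"
    by (auto simp: is_head_def)
  from chain_state_inj[OF g flipping_group_less t _ eq] u have "g = flipping_group u j" "t = u" by auto
  then show "t = u \<and> j = flip_coord g u" using flipping_group_iff[OF g j u] by auto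
next
  assume "t = u \<and> j = flip_coord g u"
  then show "is_head u j (chain_state g b t)"
    using flip_coord_less flipping_group_flip_coord[OF g u] by (auto simp: is_head_def)
qed

lemma sharing_kernel_off_head:
  assumes u: "Suc u < 2^d" and g: "g < d" and t: "t < 2^d" "t \<noteq> u" and z: "z \<in> cube n"
  shows "sharing_kernel u z (chain_state g b t) = of_bool (z = chain_state g b t)"
  unfolding sharing_kernel_def
  using z chain_state_cube[OF g] is_head_chain_state[OF u g t(1)] t(2)
  by (intro prod_bit_prob_deterministic) (auto simp: sigmoid_limit_off_head)

lemma sharing_kernel_at_head:
  assumes u: "Suc u < 2^d" and g: "g < d" and z: "z \<in> cube n"
  shows "sharing_kernel u z (chain_state g b u) =
    of_bool (z = chain_state g b u) * stay_prob g b u + of_bool (z = chain_state g b (Suc u)) * move_prob g b u"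
proof -
  let ?x = "chain_state g b u" and ?j = "flip_coord g u"
  let ?q = "\<lambda>j. sigmoid_limit (layer_slope u j ?x) (layer_offset u j ?x)"
  have x: "?x \<in> cube n" using chain_state_cube[OF g] .
  have j: "?j < n" using flip_coord_less d_less_n by (meson less_trans)
  have head_iff: "is_head u j ?x \<longleftrightarrow> j = ?j" for j
    using is_head_chain_state[OF u g, of u] u by simp
  have copy: "?q j = of_bool (?x j)" if "j < n" "j \<noteq> ?j" for j
    using sigmoid_limit_off_head[OF x that(1)] head_iff that(2) by simp
  have "?q ?j = head_bit_prob u ?j b"
    using sigmoid_limit_at_head[OF u x] head_iff by simp
  moreover have "flipping_group u ?j = g" using flipping_group_flip_coord[OF g u] .
  moreover have "?x ?j = head_pattern u ?j ?j"
    using flip_coord_less[of g u] by (subst chain_state_upd) (simp add: head_pattern_def calculation)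
  ultimately have "bit_prob (?x ?j) (?q ?j) = stay_prob g b u" "bit_prob (\<not> ?x ?j) (?q ?j) = move_prob g b u"
    using stay_move_prob(3)[OF g u] by (auto simp: bit_prob_def head_bit_prob_def)
  moreover have "?x(?j := \<not> ?x ?j) = chain_state g b (Suc u)" using chain_state_step[OF g u] by simp
  ultimately show ?thesis
    unfolding sharing_kernel_def using prod_bit_prob_one_random[OF z x j copy] by simp
qed

lemma sharing_step_on_chain:
  assumes u: "Suc u < 2^d" and g: "g < d" and z: "z \<in> cube n"
  shows "(\<Sum>t<2^d. sharing_kernel u z (chain_state g b t) * stage_weight u (g, b, t)) =
    (\<Sum>t<2^d. if chain_state g b t = z then stage_weight (Suc u) (g, b, t) else 0)"
proof -
  \<comment> \<open>both sides are the old weights with the head mass split between states \<open>u\<close> and \<open>u + 1\<close>\<close>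
  define w where "w t = (if t = u then r (chain_state g b u) else stage_weight u (g, b, t))" for t
  define moved where "moved = of_bool (z = chain_state g b (Suc u)) * tail_mass g b (Suc u)"
  have "sharing_kernel u z (chain_state g b t) * stage_weight u (g, b, t) =
      (if chain_state g b t = z then w t else 0) + (if t = u then moved else 0)" if "t < 2^d" for t
  proof (cases "t = u")
    case True
    then show ?thesis using sharing_kernel_at_head[OF u g z] stay_move_prob(4,5)[OF g u]
      by (auto simp: w_def moved_def stage_weight_def algebra_simps)
  next
    case False
    then show ?thesis using sharing_kernel_off_head[OF u g that False z] by (auto simp: w_def moved_def)
  qed
  then have "(\<Sum>t<2^d. sharing_kernel u z (chain_state g b t) * stage_weight u (g, b, t)) =
      (\<Sum>t<2^d. if chain_state g b t = z then w t else 0) + moved"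
    using u by (simp add: sum.distrib)
  also have "\<dots> = (\<Sum>t<2^d. (if chain_state g b t = z then w t else 0) + (if t = Suc u then moved else 0))"
    using u by (simp add: sum.distrib)
  also have "\<dots> = (\<Sum>t<2^d. if chain_state g b t = z then stage_weight (Suc u) (g, b, t) else 0)"
    by (intro sum.cong) (auto simp: w_def moved_def stage_weight_def)
  finally show ?thesis .
qed

lemma sharing_step:
  assumes u: "Suc u < 2^d" and z: "z \<in> cube n"
  shows "(\<Sum>y\<in>cube n. sharing_kernel u z y * stage_dist u y) = stage_dist (Suc u) z"
proof -
  have "(\<Sum>y\<in>cube n. sharing_kernel u z y * stage_dist u y) =
      (\<Sum>y\<in>cube n. \<Sum>i\<in>chain_index. if chain_state_of i = y then sharing_kernel u z y * stage_weight u i else 0)"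
    unfolding stage_dist_def sum_distrib_left by (intro sum.cong refl) simp
  also have "\<dots> = (\<Sum>i\<in>chain_index. \<Sum>y\<in>cube n. if chain_state_of i = y then sharing_kernel u z y * stage_weight u i else 0)"
    by (rule sum.swap)
  also have "\<dots> = (\<Sum>i\<in>chain_index. sharing_kernel u z (chain_state_of i) * stage_weight u i)"
    using bij_chain_state finite_cube by (intro sum.cong refl) (auto simp: sum.delta' bij_betw_def)
  also have "\<dots> = (\<Sum>g<d. \<Sum>b\<in>UNIV. \<Sum>t<2^d. if chain_state g b t = z then stage_weight (Suc u) (g, b, t) else 0)"
    unfolding sum_chain_index chain_state_of_def prod.case
    by (rule sum.cong[OF refl], rule sum.cong[OF refl], rule sharing_step_on_chain[OF u _ z]) auto
  also have "\<dots> = stage_dist (Suc u) z"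
    by (simp only: stage_dist_def sum_chain_index chain_state_of_def prod.case)
  finally show ?thesis .
qed

lemma apply_sharing_kernels:
  assumes "j \<le> 2^d - 1" and "x \<in> cube n"
  shows "apply_kernels (\<lambda>i. sharing_kernel (2^d - 2 - i)) (cube n) j (stage_dist (2^d - 1 - j)) x =
    stage_dist (2^d - 1) x"
  using assms
proof (induction j arbitrary: x)
  case (Suc j)
  define u where "u = 2^d - 1 - Suc j"
  have u: "Suc u < 2^d" "2^d - 2 - j = u" "2^d - 1 - j = Suc u"
    using Suc.prems by (auto simp: u_def)
  have "apply_kernels (\<lambda>i. sharing_kernel (2^d - 2 - i)) (cube n) (Suc j) (stage_dist u) x =
      apply_kernels (\<lambda>i. sharing_kernel (2^d - 2 - i)) (cube n) j (stage_dist (Suc u)) x"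
    unfolding apply_kernels.simps u(2) using sharing_step[OF u(1)] Suc.prems(2)
    by (rule apply_kernels_cong)
  also have "\<dots> = stage_dist (2^d - 1) x" using Suc.IH Suc.prems by (simp add: u(3)[symmetric])
  finally show ?case by (simp only: u_def)
qed simp

lemma stage_dist_last:
  assumes x: "x \<in> cube n"
  shows "stage_dist (2^d - 1) x = r x"
proof -
  have "stage_weight (2^d - 1) i = r (chain_state_of i)" if mem: "i \<in> chain_index" for i
  proof -
    obtain g b t where i: "i = (g, b, t)" "t < 2^d" using mem by (cases i) (auto simp: chain_index_def)
    have "tail_mass g b (2^d) = 0" by (simp add: tail_mass_def)
    then have "tail_mass g b (2^d - 1) = r (chain_state g b (2^d - 1))"
      using tail_mass_Suc[of "2^d - 1" g b] by simp
    then show ?thesis using i by (auto simp: stage_weight_def chain_state_of_def)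
  qed
  then have "stage_dist (2^d - 1) x = (\<Sum>i\<in>chain_index. (\<lambda>y. if y = x then r y else 0) (chain_state_of i))"
    unfolding stage_dist_def by (intro sum.cong) auto
  also have "\<dots> = (\<Sum>y\<in>cube n. if y = x then r y else 0)"
    by (rule sum.reindex_bij_betw[OF bij_chain_state])
  also have "\<dots> = r x" using x finite_cube by simp
  finally show ?thesis .
qed

lemma stage_dist_0:
  "stage_dist 0 y = (\<Sum>g<d. \<Sum>b\<in>UNIV. if y = chain_state g b 0 then tail_mass g b 0 else 0)"
proof -
  have "(\<Sum>t<2^d. if chain_state g b t = y then stage_weight 0 (g, b, t) else 0) =
      (if y = chain_state g b 0 then tail_mass g b 0 else 0)" for g b
  proof -
    have "(\<Sum>t<2^d. if chain_state g b t = y then stage_weight 0 (g, b, t) else 0) =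
        (\<Sum>t::nat<2^d. if t = 0 then (if y = chain_state g b 0 then tail_mass g b 0 else 0) else 0)"
      by (intro sum.cong) (auto simp: stage_weight_def)
    then show ?thesis by simp
  qed
  then show ?thesis by (simp only: stage_dist_def sum_chain_index chain_state_of_def prod.case)
qed

end

section \<open>The top RBM\<close>

context chain_decomposition
begin

text \<open>In the limit the top RBM is supported on the pairs \<open>(chain_state g b 0, hidden_code g)\<close>: hidden
  unit \<open>g - 1\<close> marks the start of chain group \<open>g \<ge> 1\<close>, and no hidden unit marks group \<open>0\<close>.\<close>
definition hidden_code :: "nat \<Rightarrow> nat \<Rightarrow> bool" where
  "hidden_code g = (\<lambda>k. g \<noteq> 0 \<and> k = g - 1)"

definition start_distance :: "nat \<Rightarrow> (nat \<Rightarrow> bool) \<Rightarrow> real" where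
  "start_distance g v = (\<Sum>k<n. if k = d then 0 else of_bool (v k \<noteq> chain_state g False 0 k))"

text \<open>Hidden unit \<open>j\<close> cancels the penalty \<open>start_distance 0 v\<close> when \<open>v\<close> starts a chain of group
  \<open>j + 1\<close> and otherwise costs at least \<open>n + 1\<close>; hence \<open>top_slope\<close> is maximal, namely zero, exactly on
  the pairs above.\<close>
definition top_weight :: "nat \<Rightarrow> (nat \<Rightarrow> bool) \<Rightarrow> real" where
  "top_weight j v = (if Suc j < d then start_distance 0 v - (2 * real n + 1) * start_distance (Suc j) v
     else - (2 * real n + 1))"

definition top_slope :: "(nat \<Rightarrow> bool) \<Rightarrow> (nat \<Rightarrow> bool) \<Rightarrow> real" where
  "top_slope v h = - start_distance 0 v + (\<Sum>j<n. of_bool (h j) * top_weight j v)"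

lemma bit_affine_start_distance: "bit_affine n (start_distance g)"
  unfolding start_distance_def by (intro bit_affine_sum bit_affine_bit) auto

lemma bit_affine_top_weight: "bit_affine n (top_weight j)"
  unfolding top_weight_def
  by (cases "Suc j < d") (simp_all add: bit_affine_diff bit_affine_scale bit_affine_start_distance bit_affine_const)

lemma hidden_code_cube: "g < d \<Longrightarrow> hidden_code g \<in> cube n"
  using d_less_n by (auto simp: hidden_code_def cube_def)

lemma start_distance_nonneg: "0 \<le> start_distance g v"
  unfolding start_distance_def by (intro sum_nonneg) auto

lemma start_distance_le: "start_distance g v \<le> real n"
proof -
  have "start_distance g v \<le> (\<Sum>k<n. 1)" unfolding start_distance_def by (intro sum_mono) auto
  then show ?thesis by simp
qed

lemma start_distance_ge_1: "start_distance g v \<noteq> 0 \<Longrightarrow> 1 \<le> start_distance g v"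
proof -
  define m where "m k = (if k = d then 0 else of_bool (v k \<noteq> chain_state g False 0 k) :: real)" for k
  assume "start_distance g v \<noteq> 0"
  then obtain k where k: "k < n" "m k \<noteq> 0"
    unfolding start_distance_def m_def[symmetric] by (meson lessThan_iff sum.neutral)
  then have "m k = 1" by (auto simp: m_def)
  moreover have "m k \<le> start_distance g v"
    unfolding start_distance_def m_def[symmetric] using k by (intro member_le_sum) (auto simp: m_def)
  ultimately show ?thesis by simp
qed

lemma start_distance_eq_0_iff:
  assumes v: "v \<in> cube n" and g: "g < d"
  shows "start_distance g v = 0 \<longleftrightarrow> (\<exists>b. v = chain_state g b 0)"
proof -
  have "start_distance g v = 0 \<longleftrightarrow> (\<forall>k<n. k \<noteq> d \<longrightarrow> v k = chain_state g False 0 k)"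
    unfolding start_distance_def by (subst sum_nonneg_eq_0_iff) auto
  also have "\<dots> \<longleftrightarrow> v = chain_state g (v d) 0"
  proof -
    have "chain_state g (v d) 0 k = (if k = d then v d else chain_state g False 0 k)" for k
      by (simp add: chain_state_def)
    then show ?thesis unfolding cube_eq_iff[OF v chain_state_cube[OF g]] by auto
  qed
  also have "\<dots> \<longleftrightarrow> (\<exists>b. v = chain_state g b 0)" by auto
  finally show ?thesis .
qed

lemma top_slope_support: "top_slope v h = - start_distance 0 v + (\<Sum>j\<in>{j\<in>{..<n}. h j}. top_weight j v)"
proof -
  have "(\<Sum>j<n. of_bool (h j) * top_weight j v) = (\<Sum>j<n. if h j then top_weight j v else 0)"
    by (intro sum.cong) auto
  also have "\<dots> = (\<Sum>j\<in>{j\<in>{..<n}. h j}. top_weight j v)"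
    by (rule sum.inter_filter[symmetric]) simp
  finally show ?thesis unfolding top_slope_def by simp
qed

lemma top_weight_le: "top_weight j v \<le> real n"
proof -
  have "0 \<le> (2 * real n + 1) * start_distance (Suc j) v" using start_distance_nonneg by simp
  then show ?thesis using start_distance_le[of 0 v] by (auto simp: top_weight_def)
qed

lemma top_weight_le_off_start:
  assumes "\<not> (Suc j < d \<and> start_distance (Suc j) v = 0)"
  shows "top_weight j v \<le> - real n - 1"
proof (cases "Suc j < d")
  case True
  then have "1 \<le> start_distance (Suc j) v" using assms start_distance_ge_1 by auto
  then have "2 * real n + 1 \<le> (2 * real n + 1) * start_distance (Suc j) v" by simp
  moreover have "top_weight j v = start_distance 0 v - (2 * real n + 1) * start_distance (Suc j) v"
    using True by (simp add: top_weight_def)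
  ultimately show ?thesis using start_distance_le[of 0 v] by linarith
qed (simp add: top_weight_def)

lemma hidden_code_eq_iff:
  assumes h: "h \<in> cube n" and g: "g < d"
  shows "h = hidden_code g \<longleftrightarrow> {j\<in>{..<n}. h j} = (if g = 0 then {} else {g - 1})"
proof -
  have "h = hidden_code g \<longleftrightarrow> (\<forall>j<n. h j \<longleftrightarrow> g \<noteq> 0 \<and> j = g - 1)"
    using cube_eq_iff[OF h hidden_code_cube[OF g]] by (simp add: hidden_code_def)
  also have "\<dots> \<longleftrightarrow> {j\<in>{..<n}. h j} = (if g = 0 then {} else {g - 1})"
    using g d_less_n by auto
  finally show ?thesis .
qed

lemma start_distance_eq_0_unique:
  assumes v: "v \<in> cube n" and g: "g < d" "g' < d"
    and "start_distance g v = 0" "start_distance g' v = 0"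
  shows "g = g'"
proof -
  obtain b where "v = chain_state g b 0" using start_distance_eq_0_iff[OF v g(1)] assms(4) by blast
  moreover obtain b' where "v = chain_state g' b' 0" using start_distance_eq_0_iff[OF v g(2)] assms(5) by blast
  ultimately show ?thesis using chain_state_inj[OF g, of 0 0 b b'] by auto
qed

lemma top_slope_large_support:
  assumes v: "v \<in> cube n" and card: "2 \<le> card {j\<in>{..<n}. h j}"
  shows "top_slope v h \<le> -1"
proof -
  let ?S = "{j\<in>{..<n}. h j}"
  \<comment> \<open>at most one hidden unit of \<open>h\<close> points to a chain start containing \<open>v\<close>\<close>
  have "\<exists>j0\<in>?S. \<forall>j\<in>?S - {j0}. \<not> (Suc j < d \<and> start_distance (Suc j) v = 0)"
  proof (cases "\<exists>j\<in>?S. Suc j < d \<and> start_distance (Suc j) v = 0")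
    case True
    then obtain j0 where j0: "j0 \<in> ?S" "Suc j0 < d" "start_distance (Suc j0) v = 0" by auto
    have "\<not> (Suc j < d \<and> start_distance (Suc j) v = 0)" if "j \<in> ?S - {j0}" for j
      using start_distance_eq_0_unique[OF v, of "Suc j" "Suc j0"] j0 that by auto
    then show ?thesis using j0(1) by blast
  next
    case False
    have "?S \<noteq> {}"
    proof
      assume "?S = {}"
      then have "card ?S = 0" by (simp only: card.empty)
      with card show False by linarith
    qed
    then show ?thesis using False by blast
  qed
  then obtain j0 where j0: "j0 \<in> ?S" and off: "\<forall>j\<in>?S - {j0}. \<not> (Suc j < d \<and> start_distance (Suc j) v = 0)"
    by blast
  have "1 \<le> real (card (?S - {j0}))" using card j0 by (simp add: card_Diff_singleton)
  have "(\<Sum>j\<in>?S. top_weight j v) = top_weight j0 v + (\<Sum>j\<in>?S - {j0}. top_weight j v)"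
    using j0 by (simp add: sum.remove)
  also have "(\<Sum>j\<in>?S - {j0}. top_weight j v) \<le> real (card (?S - {j0})) * (- real n - 1)"
    using off top_weight_le_off_start by (intro sum_bounded_above) auto
  also have "\<dots> \<le> - real n - 1"
    using mult_right_mono_neg[OF \<open>1 \<le> real (card (?S - {j0}))\<close>, of "- real n - 1"] by simp
  finally have "(\<Sum>j\<in>?S. top_weight j v) \<le> -1" using top_weight_le[of j0 v] by simp
  then show ?thesis using start_distance_nonneg[of 0 v] by (simp add: top_slope_support)
qed

lemma ex_chain_start_iff:
  assumes v: "v \<in> cube n" and h: "h \<in> cube n"
  shows "(\<exists>g<d. \<exists>b. v = chain_state g b 0 \<and> h = hidden_code g) \<longleftrightarrow>
    (\<exists>g<d. start_distance g v = 0 \<and> {j\<in>{..<n}. h j} = (if g = 0 then {} else {g - 1}))"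
proof -
  have "(\<exists>b. v = chain_state g b 0 \<and> h = hidden_code g) \<longleftrightarrow>
      start_distance g v = 0 \<and> {j\<in>{..<n}. h j} = (if g = 0 then {} else {g - 1})" if "g < d" for g
    using start_distance_eq_0_iff[OF v that] hidden_code_eq_iff[OF h that] by auto
  then show ?thesis by blast
qed

lemma top_slope_nonpos:
  assumes v: "v \<in> cube n" and h: "h \<in> cube n"
  shows "top_slope v h \<le> 0 \<and> (top_slope v h = 0 \<longleftrightarrow> (\<exists>g<d. \<exists>b. v = chain_state g b 0 \<and> h = hidden_code g))"
proof -
  let ?S = "{j\<in>{..<n}. h j}"
  note code_iff = ex_chain_start_iff[OF v h]
  consider "?S = {}" | j where "?S = {j}" | "2 \<le> card ?S"
  proof -
    have "card ?S = 0 \<or> card ?S = 1 \<or> 2 \<le> card ?S" by linarith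
    then show ?thesis using that card_1_singleton_iff[of ?S] by auto
  qed
  then show ?thesis
  proof cases
    case 1
    have "(\<exists>g<d. \<exists>b. v = chain_state g b 0 \<and> h = hidden_code g) \<longleftrightarrow> start_distance 0 v = 0"
      unfolding code_iff 1 using d_pos by auto
    moreover have "top_slope v h = - start_distance 0 v" unfolding top_slope_support 1 by simp
    ultimately show ?thesis using start_distance_nonneg[of 0 v] by auto
  next
    case (2 j)
    have "(\<exists>g<d. \<exists>b. v = chain_state g b 0 \<and> h = hidden_code g) \<longleftrightarrow> Suc j < d \<and> start_distance (Suc j) v = 0"
      unfolding code_iff 2 by (auto simp: gr0_conv_Suc)
    moreover have "top_slope v h = (if Suc j < d then - (2 * real n + 1) * start_distance (Suc j) v
        else - start_distance 0 v - (2 * real n + 1))"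
      unfolding top_slope_support 2 by (simp add: top_weight_def algebra_simps)
    ultimately show ?thesis
      using start_distance_nonneg[of 0 v] start_distance_nonneg[of "Suc j" v]
      by (cases "Suc j < d") (simp_all add: mult_le_0_iff)
  next
    case 3
    have "\<not> (\<exists>g<d. \<exists>b. v = chain_state g b 0 \<and> h = hidden_code g)"
      unfolding code_iff
    proof clarify
      fix g assume "?S = (if g = 0 then {} else {g - 1})"
      then have "card ?S \<le> 1" by (simp only:) simp
      with 3 show False by linarith
    qed
    moreover have "top_slope v h \<le> -1" using top_slope_large_support[OF v 3] .
    ultimately show ?thesis by simp
  qed
qed

definition top_slope_energy :: "(nat \<Rightarrow> bool) \<Rightarrow> (nat \<Rightarrow> bool) \<Rightarrow> real" where
  "top_slope_energy = rbm_energy n (\<lambda>j. affine_coeff (top_weight j)) (affine_coeff (\<lambda>v. - start_distance 0 v))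
     (\<lambda>j. top_weight j (\<lambda>_. False))"

lemma top_slope_energy_eq: "top_slope_energy v h = top_slope v h + start_distance 0 (\<lambda>_. False)"
proof -
  have "bit_affine n (\<lambda>v. - start_distance 0 v)"
    using bit_affine_scale[OF bit_affine_start_distance, of "-1"] by simp
  then show ?thesis
    by (simp add: top_slope_energy_def rbm_energy_affine bit_affine_top_weight top_slope_def)
qed

definition start_pair :: "nat \<times> bool \<Rightarrow> (nat \<Rightarrow> bool) \<times> (nat \<Rightarrow> bool)" where
  "start_pair = (\<lambda>(g, b). (chain_state g b 0, hidden_code g))"

lemma inj_on_start_pair: "inj_on start_pair ({..<d} \<times> UNIV)"
proof (rule inj_onI)
  fix i i' assume "i \<in> {..<d} \<times> UNIV" "i' \<in> {..<d} \<times> UNIV" "start_pair i = start_pair i'"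
  then show "i = i'"
    using chain_state_inj[of "fst i" "fst i'" 0 0 "snd i" "snd i'"]
    by (auto simp: start_pair_def case_prod_unfold prod_eq_iff)
qed

lemma top_slope_maximizers:
  "{s \<in> cube n \<times> cube n. top_slope (fst s) (snd s) = 0} = start_pair ` ({..<d} \<times> UNIV)"
proof (intro equalityI subsetI)
  fix s assume "s \<in> {s \<in> cube n \<times> cube n. top_slope (fst s) (snd s) = 0}"
  then obtain g b where "g < d" "s = start_pair (g, b)"
    using top_slope_nonpos by (cases s) (auto simp: start_pair_def)
  then show "s \<in> start_pair ` ({..<d} \<times> UNIV)" by auto
next
  fix s assume "s \<in> start_pair ` ({..<d} \<times> UNIV)"
  then obtain g b where g: "g < d" and s: "s = start_pair (g, b)" by auto
  then have "top_slope (chain_state g b 0) (hidden_code g) = 0"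
    using top_slope_nonpos[OF chain_state_cube[OF g] hidden_code_cube[OF g]] by blast
  then show "s \<in> {s \<in> cube n \<times> cube n. top_slope (fst s) (snd s) = 0}"
    using s chain_state_cube[OF g] hidden_code_cube[OF g] by (simp add: start_pair_def)
qed

end

context chain_transport
begin

text \<open>On the pair of chain \<open>(g, b)\<close> the offset energy is \<open>ln (tail_mass g b 0)\<close> up to a constant,
  so the limiting RBM gives that pair the whole mass of the chain.\<close>
definition top_offset_visible :: "(nat \<Rightarrow> bool) \<Rightarrow> real" where
  "top_offset_visible v = ln (tail_mass 0 (v d) 0)"

definition top_offset_hidden :: "nat \<Rightarrow> (nat \<Rightarrow> bool) \<Rightarrow> real" where
  "top_offset_hidden j v =
     (if Suc j < d then ln (tail_mass (Suc j) (v d) 0) - ln (tail_mass 0 (v d) 0) else 0)"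

definition top_limit :: "(nat \<Rightarrow> bool) \<Rightarrow> (nat \<Rightarrow> bool) \<Rightarrow> real" where
  "top_limit v h = (\<Sum>g<d. \<Sum>b\<in>UNIV. if v = chain_state g b 0 \<and> h = hidden_code g then tail_mass g b 0 else 0)"

definition top_W :: "nat \<Rightarrow> nat \<Rightarrow> nat \<Rightarrow> real" where
  "top_W K j k = real K * affine_coeff (top_weight j) k + affine_coeff (top_offset_hidden j) k"

definition top_B :: "nat \<Rightarrow> nat \<Rightarrow> real" where
  "top_B K k = real K * affine_coeff (\<lambda>v. - start_distance 0 v) k + affine_coeff top_offset_visible k"

definition top_C :: "nat \<Rightarrow> nat \<Rightarrow> real" where
  "top_C K j = real K * top_weight j (\<lambda>_. False) + top_offset_hidden j (\<lambda>_. False)"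

definition top_offset_energy :: "(nat \<Rightarrow> bool) \<Rightarrow> (nat \<Rightarrow> bool) \<Rightarrow> real" where
  "top_offset_energy = rbm_energy n (\<lambda>j. affine_coeff (top_offset_hidden j)) (affine_coeff top_offset_visible)
     (\<lambda>j. top_offset_hidden j (\<lambda>_. False))"

lemma top_offset_energy_start:
  assumes g: "g < d"
  shows "top_offset_energy (chain_state g b 0) (hidden_code g) = ln (tail_mass g b 0) - top_offset_visible (\<lambda>_. False)"
proof -
  have "bit_affine n top_offset_visible" "\<And>j. bit_affine n (top_offset_hidden j)"
    unfolding top_offset_visible_def top_offset_hidden_def
    using d_less_n by (auto intro: bit_affine_bit simp: bit_affine_const)
  moreover have "(\<Sum>j<n. of_bool (hidden_code g j) * top_offset_hidden j (chain_state g b 0)) =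
      ln (tail_mass g b 0) - top_offset_visible (chain_state g b 0)"
  proof (cases "g = 0")
    case False
    have "(\<Sum>j<n. of_bool (hidden_code g j) * top_offset_hidden j (chain_state g b 0)) =
        top_offset_hidden (g - 1) (chain_state g b 0)"
      using False g d_less_n by (simp add: hidden_code_def of_bool_def if_distrib[of "\<lambda>x. x * _"] cong: if_cong)
    then show ?thesis using False g by (simp add: top_offset_hidden_def top_offset_visible_def)
  qed (simp add: hidden_code_def top_offset_visible_def)
  ultimately show ?thesis by (simp add: top_offset_energy_def rbm_energy_affine)
qed

lemma sum_exp_top_offset_energy:
  "(\<Sum>s\<in>start_pair ` ({..<d} \<times> UNIV). exp (top_offset_energy (fst s) (snd s))) =
    1 / exp (top_offset_visible (\<lambda>_. False))"
proof -
  have "(\<Sum>s\<in>start_pair ` ({..<d} \<times> UNIV). exp (top_offset_energy (fst s) (snd s))) =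
      (\<Sum>i\<in>{..<d} \<times> UNIV. exp (top_offset_energy (fst (start_pair i)) (snd (start_pair i))))"
    by (rule sum.reindex_cong[OF inj_on_start_pair refl refl])
  also have "\<dots> = (\<Sum>(g, b)\<in>{..<d} \<times> UNIV. tail_mass g b 0 / exp (top_offset_visible (\<lambda>_. False)))"
  proof (intro sum.cong refl)
    fix i assume "i \<in> {..<d} \<times> (UNIV :: bool set)"
    then obtain g b where "i = (g, b)" "g < d" by auto
    then show "exp (top_offset_energy (fst (start_pair i)) (snd (start_pair i))) =
        (case i of (g, b) \<Rightarrow> tail_mass g b 0 / exp (top_offset_visible (\<lambda>_. False)))"
      using tail_mass_pos[of g 0 b] by (simp add: start_pair_def top_offset_energy_start exp_diff)
  qed
  also have "\<dots> = 1 / exp (top_offset_visible (\<lambda>_. False))"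
    using sum_tail_mass_start by (simp add: sum_divide_distrib[symmetric] sum.cartesian_product[symmetric])
  finally show ?thesis .
qed

lemma top_limit_start:
  assumes g: "g < d"
  shows "top_limit (chain_state g b 0) (hidden_code g) = tail_mass g b 0"
proof -
  have "chain_state g b 0 = chain_state g' b' 0 \<and> hidden_code g = hidden_code g' \<longleftrightarrow> g' = g \<and> b' = b"
    if "g' < d" for g' b'
    using chain_state_inj[OF g that, of 0 0 b b'] by auto
  then have "top_limit (chain_state g b 0) (hidden_code g) =
      (\<Sum>g'<d. \<Sum>b'\<in>UNIV. if g' = g then if b' = b then tail_mass g' b' 0 else 0 else 0)"
    unfolding top_limit_def by (intro sum.cong refl) auto
  also have "\<dots> = (\<Sum>g'<d. if g' = g then tail_mass g b 0 else 0)"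
    by (intro sum.cong refl) simp
  also have "\<dots> = tail_mass g b 0" using g by simp
  finally show ?thesis .
qed

lemma top_limit_off_start:
  "\<not> (\<exists>g<d. \<exists>b. v = chain_state g b 0 \<and> h = hidden_code g) \<Longrightarrow> top_limit v h = 0"
  unfolding top_limit_def by (intro sum.neutral) auto

lemma top_limit_marginal: "y \<in> cube n \<Longrightarrow> (\<Sum>h\<in>cube n. top_limit y h) = stage_dist 0 y"
proof -
  assume y: "y \<in> cube n"
  have "(\<Sum>h\<in>cube n. top_limit y h) =
      (\<Sum>g<d. \<Sum>b\<in>UNIV. \<Sum>h\<in>cube n. if y = chain_state g b 0 \<and> h = hidden_code g then tail_mass g b 0 else 0)"
    unfolding top_limit_def by (subst sum.swap, subst sum.swap) (rule refl)
  also have "\<dots> = (\<Sum>g<d. \<Sum>b\<in>UNIV. if y = chain_state g b 0 then tail_mass g b 0 else 0)"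
    using hidden_code_cube finite_cube by (intro sum.cong refl) (simp add: sum.delta' conj_commute)
  finally show ?thesis by (simp add: stage_dist_0)
qed

lemma tendsto_top_rbm:
  assumes v: "v \<in> cube n" and h: "h \<in> cube n"
  shows "((\<lambda>K. rbm_prob n (top_W K) (top_B K) (top_C K) v h) \<longlongrightarrow> top_limit v h) sequentially"
proof -
  define c where "c = start_distance 0 (\<lambda>_. False)"
  have E: "top_slope_energy v' h' = c \<longleftrightarrow> top_slope v' h' = 0" for v' h'
    by (simp add: c_def top_slope_energy_eq)
  have maximizers: "{s \<in> cube n \<times> cube n. top_slope_energy (fst s) (snd s) = c} = start_pair ` ({..<d} \<times> UNIV)"
    unfolding E by (rule top_slope_maximizers)
  have slope_le: "top_slope_energy (fst s) (snd s) \<le> c" if "s \<in> cube n \<times> cube n" for s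
    using top_slope_nonpos[of "fst s" "snd s"] that by (auto simp: c_def top_slope_energy_eq)
  have "start_pair (0, False) \<in> {s \<in> cube n \<times> cube n. top_slope_energy (fst s) (snd s) = c}"
    unfolding maximizers using d_pos by auto
  then have start0: "start_pair (0, False) \<in> cube n \<times> cube n"
    "top_slope_energy (fst (start_pair (0, False))) (snd (start_pair (0, False))) = c" by auto
  have "((\<lambda>K. rbm_prob n (top_W K) (top_B K) (top_C K) v h) \<longlongrightarrow>
      (if top_slope_energy v h = c then exp (top_offset_energy v h) else 0) /
      (\<Sum>s\<in>{s \<in> cube n \<times> cube n. top_slope_energy (fst s) (snd s) = c}. exp (top_offset_energy (fst s) (snd s))))
      sequentially"
    using tendsto_rbm_prob[OF slope_le[unfolded top_slope_energy_def] start0[unfolded top_slope_energy_def] v h,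
        where W' = "\<lambda>j. affine_coeff (top_offset_hidden j)" and B' = "affine_coeff top_offset_visible"
        and C' = "\<lambda>j. top_offset_hidden j (\<lambda>_. False)"]
    unfolding top_W_def top_B_def top_C_def top_slope_energy_def top_offset_energy_def by (simp only: fst_conv snd_conv)
  moreover have "(if top_slope_energy v h = c then exp (top_offset_energy v h) else 0) *
      exp (top_offset_visible (\<lambda>_. False)) = top_limit v h"
  proof (cases "top_slope_energy v h = c")
    case True
    then obtain g b where "g < d" "v = chain_state g b 0" "h = hidden_code g"
      using top_slope_nonpos[OF v h] by (auto simp: E)
    then show ?thesis
      using True tail_mass_pos by (simp add: top_offset_energy_start top_limit_start exp_diff)
  next
    case False
    then show ?thesis using top_slope_nonpos[OF v h] by (auto simp: E top_limit_off_start)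
  qed
  ultimately show ?thesis by (simp add: maximizers sum_exp_top_offset_energy)
qed

text \<open>Layer \<open>i\<close> above the visible one performs sharing step \<open>2\<^sup>d - 2 - i\<close>.\<close>
definition layer_W :: "nat \<Rightarrow> nat \<Rightarrow> nat \<Rightarrow> nat \<Rightarrow> real" where
  "layer_W K i j k = real K * affine_coeff (layer_slope (2^d - 2 - i) j) k + affine_coeff (layer_offset (2^d - 2 - i) j) k"

definition layer_c :: "nat \<Rightarrow> nat \<Rightarrow> nat \<Rightarrow> real" where
  "layer_c K i j = real K * layer_slope (2^d - 2 - i) j (\<lambda>_. False) + layer_offset (2^d - 2 - i) j (\<lambda>_. False)"

lemma tendsto_dbn_visible:
  assumes x: "x \<in> cube n"
  shows "((\<lambda>K. dbn_visible n (2^d) (top_W K) (top_B K) (top_C K) (layer_W K) (layer_c K) x) \<longlongrightarrow> r x)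
    sequentially"
proof -
  have m: "2^d = Suc (2^d - 1)" by simp
  have "((\<lambda>K. apply_kernels (\<lambda>i. cond_prob n (layer_W K i) (layer_c K i)) (cube n) (2^d - 1)
      (\<lambda>y. \<Sum>h\<in>cube n. rbm_prob n (top_W K) (top_B K) (top_C K) y h) x) \<longlongrightarrow>
      apply_kernels (\<lambda>i. sharing_kernel (2^d - 2 - i)) (cube n) (2^d - 1) (\<lambda>y. \<Sum>h\<in>cube n. top_limit y h) x)
      sequentially"
  proof (rule tendsto_apply_kernels[OF _ _ x])
    show "((\<lambda>K. cond_prob n (layer_W K i) (layer_c K i) z y) \<longlongrightarrow> sharing_kernel (2^d - 2 - i) z y) sequentially"
      for i z y
      unfolding layer_W_def layer_c_def sharing_kernel_def
      by (rule tendsto_cond_prob_affine[OF bit_affine_layer_slope bit_affine_layer_offset])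
    show "((\<lambda>K. \<Sum>h\<in>cube n. rbm_prob n (top_W K) (top_B K) (top_C K) y h) \<longlongrightarrow>
        (\<Sum>h\<in>cube n. top_limit y h)) sequentially" if "y \<in> cube n" for y
      using that by (intro tendsto_sum tendsto_top_rbm)
  qed
  moreover have "apply_kernels (\<lambda>i. sharing_kernel (2^d - 2 - i)) (cube n) (2^d - 1) (\<lambda>y. \<Sum>h\<in>cube n. top_limit y h) x
      = apply_kernels (\<lambda>i. sharing_kernel (2^d - 2 - i)) (cube n) (2^d - 1) (stage_dist 0) x"
    by (rule apply_kernels_cong[OF top_limit_marginal x])
  also have "\<dots> = stage_dist (2^d - 1) x" using apply_sharing_kernels[of "2^d - 1" x] x by simp
  also have "\<dots> = r x" by (rule stage_dist_last[OF x])
  ultimately show ?thesis by (subst m) (simp only: dbn_visible_eq_apply_kernels)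
qed

end

theorem theorem2:
  fixes b n m :: nat and p :: "(nat \<Rightarrow> bool) \<Rightarrow> real" and \<epsilon> :: real
  assumes "b \<ge> 1"
    and "n = 2 ^ b div 2 + b"
    and "real m = 2 ^ n / (2 * real (n - b))"
    and "is_distribution n p"
    and "\<epsilon> > 0"
  shows "\<exists>W B C Ws cs. KL_div n p (dbn_visible n m W B C Ws cs) < ereal \<epsilon>"
proof -
  define c where "c = b - 1"
  define d where "d = n - b"
  have b: "b = Suc c" using assms(1) by (simp add: c_def)
  have d: "d = 2 ^ c" and n: "n = d + Suc c"
    using assms(2) by (simp_all add: d_def b)
  have "real (n - b) = 2 ^ c" using d by (simp add: d_def)
  then have "real m = 2 ^ n / 2 ^ b" using assms(3) by (simp add: b)
  then have m: "m = 2 ^ d" by (simp add: n b power_add)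
  obtain P \<delta> where "gray_code d P \<delta>" using gray_code_exists by blast
  moreover obtain label where "bij_betw label {..<d} (cube c)"
    using ex_bij_betw_nat_finite[OF finite_cube, of c] by (auto simp: card_cube d atLeast0LessThan)
  moreover obtain r where r: "\<forall>x\<in>cube n. r x > 0" "(\<Sum>x\<in>cube n. r x) = 1" "KL_div n p r < ereal \<epsilon>"
    using exists_positive_KL_div_less[OF assms(4,5)] by blast
  ultimately interpret chain_transport d c n P \<delta> label r
    by unfold_locales (auto simp: n)
  have "\<exists>K. KL_div n p ((\<lambda>K. dbn_visible n (2^d) (top_W K) (top_B K) (top_C K) (layer_W K) (layer_c K)) K)
      < ereal \<epsilon>"
    by (rule KL_div_less_of_tendsto[OF r(1) _ r(3)]) (use tendsto_dbn_visible in blast)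
  then show ?thesis unfolding m by blast
qed

end
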